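(* If $G$ is a triangle-free $K_4$-minor-free graph, then $G$ is $(2,2,1)$-AT extendable with respect to $(x,y,z)$ for all distinct vertices $x,y,z\in V(G)$.
   Context: All graphs are finite and simple. For an orientation $D$ of a graph $G$, an Eulerian sub-digraph of $D$ is a spanning sub-digraph $F$ of $D$ with $d^+_F(v)=d^-_F(v)$ for every vertex $v$. Let $\mathrm{diff}(D)$ be the number of Eulerian sub-digraphs of $D$ with an even number of arcs minus the number with an odd number of arcs; $D$ is an AT-orientation if $\mathrm{diff}(D)\neq 0$. For $f:V(G)\to\mathbb{N}$, $G$ is $f$-AT if $G$ has an AT-orientation $D$ with $d^+_D(v)\le f(v)-1$ for every vertex $v$. Given distinct vertices $v_1,\dots,v_k$ and integers $a_i\in\{1,2\}$, define $f(v_i)=a_i$ for $i\in[k]$ and $f(v)=3$ for all other vertices; $G$ is $(a_1,\dots,a_k)$-AT extendable with respect to $(v_1,\dots,v_k)$ if $G$ is $f$-AT. *)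

theory Defs
  imports Main
begin

definition simple_graph :: "'a set \<Rightarrow> 'a set set \<Rightarrow> bool" where
  "simple_graph V E \<longleftrightarrow> finite V \<and>
     (\<forall>e\<in>E. \<exists>u v. u \<noteq> v \<and> u \<in> V \<and> v \<in> V \<and> e = {u, v})"

definition triangle_free :: "'a set set \<Rightarrow> bool" where
  "triangle_free E \<longleftrightarrow> \<not> (\<exists>a b c. {a, b} \<in> E \<and> {b, c} \<in> E \<and> {a, c} \<in> E)"

definition connected_in :: "'a set set \<Rightarrow> 'a set \<Rightarrow> bool" where
  "connected_in E S \<longleftrightarrow>
     (\<forall>u\<in>S. \<forall>v\<in>S. (\<lambda>x y. x \<in> S \<and> y \<in> S \<and> {x, y} \<in> E)\<^sup>*\<^sup>* u v)"

text \<open>G contains K4 as a minor iff there are four pairwise disjoint nonempty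
  connected branch sets, pairwise joined by an edge.\<close>
definition has_K4_minor :: "'a set \<Rightarrow> 'a set set \<Rightarrow> bool" where
  "has_K4_minor V E \<longleftrightarrow> (\<exists>B :: nat \<Rightarrow> 'a set.
     (\<forall>i<4. B i \<noteq> {} \<and> B i \<subseteq> V \<and> connected_in E (B i)) \<and>
     (\<forall>i<4. \<forall>j<4. i \<noteq> j \<longrightarrow> B i \<inter> B j = {} \<and>
        (\<exists>u\<in>B i. \<exists>v\<in>B j. {u, v} \<in> E)))"

definition orientation :: "'a set set \<Rightarrow> ('a \<times> 'a) set \<Rightarrow> bool" where
  "orientation E D \<longleftrightarrow>
     (\<forall>(u, v)\<in>D. {u, v} \<in> E) \<and>
     (\<forall>u v. {u, v} \<in> E \<longrightarrow> ((u, v) \<in> D \<longleftrightarrow> (v, u) \<notin> D))"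

definition outdeg :: "('a \<times> 'a) set \<Rightarrow> 'a \<Rightarrow> nat" where
  "outdeg D v = card {w. (v, w) \<in> D}"

definition indeg :: "('a \<times> 'a) set \<Rightarrow> 'a \<Rightarrow> nat" where
  "indeg D v = card {w. (w, v) \<in> D}"

definition eulerian_subdigraphs :: "'a set \<Rightarrow> ('a \<times> 'a) set \<Rightarrow> ('a \<times> 'a) set set" where
  "eulerian_subdigraphs V D = {F. F \<subseteq> D \<and> (\<forall>v\<in>V. outdeg F v = indeg F v)}"

definition diff :: "'a set \<Rightarrow> ('a \<times> 'a) set \<Rightarrow> int" where
  "diff V D = int (card {F \<in> eulerian_subdigraphs V D. even (card F)})
            - int (card {F \<in> eulerian_subdigraphs V D. odd (card F)})"

definition AT_orientation :: "'a set \<Rightarrow> 'a set set \<Rightarrow> ('a \<times> 'a) set \<Rightarrow> bool" where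
  "AT_orientation V E D \<longleftrightarrow> orientation E D \<and> diff V D \<noteq> 0"

definition f_AT :: "'a set \<Rightarrow> 'a set set \<Rightarrow> ('a \<Rightarrow> nat) \<Rightarrow> bool" where
  "f_AT V E f \<longleftrightarrow> (\<exists>D. AT_orientation V E D \<and> (\<forall>v\<in>V. outdeg D v \<le> f v - 1))"

text \<open>(a_1,...,a_k)-AT extendable w.r.t. (v_1,...,v_k): f(v_i) = a_i, f = 3 elsewhere.\<close>
definition AT_extendable :: "'a set \<Rightarrow> 'a set set \<Rightarrow> nat list \<Rightarrow> 'a list \<Rightarrow> bool" where
  "AT_extendable V E as vs \<longleftrightarrow>
     f_AT V E (\<lambda>v. case map_of (zip vs as) v of None \<Rightarrow> 3 | Some a \<Rightarrow> a)"

end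

theory Submission
  imports Defs
begin

definition neighbors :: "'a set set \<Rightarrow> 'a \<Rightarrow> 'a set" where
  "neighbors E v = {u. {u, v} \<in> E}"

definition degree :: "'a set set \<Rightarrow> 'a \<Rightarrow> nat" where
  "degree E v = card (neighbors E v)"

lemma in_neighbors_iff: "u \<in> neighbors E v \<longleftrightarrow> {u, v} \<in> E"
  by (simp add: neighbors_def)

lemma simple_graph_edgeD:
  assumes "simple_graph V E" "{u, v} \<in> E"
  shows "u \<in> V" "v \<in> V" "u \<noteq> v"
proof -
  obtain a b where "a \<noteq> b" "a \<in> V" "b \<in> V" "{u, v} = {a, b}"
    using assms unfolding simple_graph_def by blast
  then show "u \<in> V" "v \<in> V" "u \<noteq> v" by (auto simp: doubleton_eq_iff)
qed

lemma simple_graph_finite: "simple_graph V E \<Longrightarrow> finite V"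
  by (simp add: simple_graph_def)

lemma neighbors_subset: "simple_graph V E \<Longrightarrow> neighbors E v \<subseteq> V"
  unfolding neighbors_def using simple_graph_edgeD by fastforce

lemma finite_neighbors: "simple_graph V E \<Longrightarrow> finite (neighbors E v)"
  by (meson finite_subset neighbors_subset simple_graph_finite)

lemma self_notin_neighbors: "simple_graph V E \<Longrightarrow> v \<notin> neighbors E v"
  unfolding neighbors_def using simple_graph_edgeD(3) by fastforce

lemma degree_le_card:
  "simple_graph V E \<Longrightarrow> neighbors E v \<subseteq> A \<Longrightarrow> finite A \<Longrightarrow> degree E v \<le> card A"
  unfolding degree_def by (simp add: card_mono)

lemma degree_le_two: "simple_graph V E \<Longrightarrow> neighbors E v \<subseteq> {a, b} \<Longrightarrow> degree E v \<le> 2"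
  using degree_le_card[of V E v "{a, b}"] card_insert_le_m1[of 2 "{b}" a] by simp

lemma degree_le_one: "simple_graph V E \<Longrightarrow> neighbors E v \<subseteq> {a} \<Longrightarrow> degree E v \<le> 1"
  using degree_le_card[of V E v "{a}"] by simp

lemma degree_two_neighborsE:
  assumes "degree E v = 2"
  obtains a b where "a \<noteq> b" "neighbors E v = {a, b}"
  using assms unfolding degree_def by (metis card_2_iff)

lemma neighbors_eq_pairD:
  assumes "neighbors E x = {a, b}"
  shows "{a, x} \<in> E" "{x, a} \<in> E" "{b, x} \<in> E" "{x, b} \<in> E"
  using assms unfolding neighbors_def by (auto simp: insert_commute)

lemma triangle_freeD: "triangle_free E \<Longrightarrow> {u, v} \<in> E \<Longrightarrow> {v, w} \<in> E \<Longrightarrow> {u, w} \<notin> E"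
  unfolding triangle_free_def by blast

lemma triangle_free_neighbors_pair:
  assumes "triangle_free E" "neighbors E x = {a, b}"
  shows "{a, b} \<notin> E"
  using triangle_freeD[OF assms(1) neighbors_eq_pairD(1,4)[OF assms(2)]] .

definition remove_vertices :: "'a set \<Rightarrow> 'a set set \<Rightarrow> 'a set set" where
  "remove_vertices X E = {e \<in> E. e \<inter> X = {}}"

lemma simple_graph_remove_vertices:
  "simple_graph V E \<Longrightarrow> simple_graph (V - X) (remove_vertices X E)"
  unfolding simple_graph_def remove_vertices_def by fastforce

lemma triangle_free_remove_vertices: "triangle_free E \<Longrightarrow> triangle_free (remove_vertices X E)"
  unfolding triangle_free_def remove_vertices_def by blast

lemma neighbors_remove_vertices:
  "v \<notin> X \<Longrightarrow> neighbors (remove_vertices X E) v = neighbors E v - X"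
  unfolding neighbors_def remove_vertices_def by auto

definition adjacent_sets :: "'a set set \<Rightarrow> 'a set \<Rightarrow> 'a set \<Rightarrow> bool" where
  "adjacent_sets E X Y \<longleftrightarrow> (\<exists>u\<in>X. \<exists>v\<in>Y. {u, v} \<in> E)"

lemma adjacent_sets_sym: "adjacent_sets E X Y \<Longrightarrow> adjacent_sets E Y X"
  unfolding adjacent_sets_def by (metis insert_commute)

lemma has_K4_minorI:
  assumes "\<forall>B\<in>{B0, B1, B2, B3}. B \<noteq> {} \<and> B \<subseteq> V \<and> connected_in E B"
    and "B0 \<inter> B1 = {}" "B0 \<inter> B2 = {}" "B0 \<inter> B3 = {}"
    and "B1 \<inter> B2 = {}" "B1 \<inter> B3 = {}" "B2 \<inter> B3 = {}"
    and "adjacent_sets E B0 B1" "adjacent_sets E B0 B2" "adjacent_sets E B0 B3"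
    and "adjacent_sets E B1 B2" "adjacent_sets E B1 B3" "adjacent_sets E B2 B3"
  shows "has_K4_minor V E"
proof -
  define B where "B = (\<lambda>k::nat. [B0, B1, B2, B3] ! k)"
  define linked where "linked i j \<longleftrightarrow> B i \<inter> B j = {} \<and> adjacent_sets E (B i) (B j)" for i j
  have cases4: "k < 4 \<Longrightarrow> k = 0 \<or> k = 1 \<or> k = 2 \<or> k = 3" for k :: nat
    by arith
  have branch: "B i \<noteq> {} \<and> B i \<subseteq> V \<and> connected_in E (B i)" if "i < 4" for i
    using cases4[OF that] assms(1) by (auto simp: B_def)
  have "linked i j" if "i < j" "j < 4" for i j
  proof -
    have "i = 0 \<and> j = 1 \<or> i = 0 \<and> j = 2 \<or> i = 0 \<and> j = 3 \<or>
          i = 1 \<and> j = 2 \<or> i = 1 \<and> j = 3 \<or> i = 2 \<and> j = 3"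
      using that by arith
    then show ?thesis
      using assms(2-13) by (elim disjE) (simp_all add: linked_def B_def)
  qed
  then have "linked i j" if "i \<noteq> j" "i < 4" "j < 4" for i j
    using that by (metis linked_def adjacent_sets_sym inf_commute linorder_neqE_nat)
  then show ?thesis
    unfolding has_K4_minor_def linked_def adjacent_sets_def using branch by blast
qed

lemma connected_in_mono:
  assumes "connected_in E' S" "E' \<subseteq> E"
  shows "connected_in E S"
  unfolding connected_in_def
proof (intro ballI)
  fix u v assume "u \<in> S" "v \<in> S"
  with assms(1) have "(\<lambda>x y. x \<in> S \<and> y \<in> S \<and> {x, y} \<in> E')\<^sup>*\<^sup>* u v"
    by (simp add: connected_in_def)
  then show "(\<lambda>x y. x \<in> S \<and> y \<in> S \<and> {x, y} \<in> E)\<^sup>*\<^sup>* u v"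
    by (induction rule: rtranclp_induct) (use assms(2) in \<open>auto intro: rtranclp.rtrancl_into_rtrancl\<close>)
qed

lemma has_K4_minor_mono:
  assumes "has_K4_minor V' E'" "V' \<subseteq> V" "E' \<subseteq> E"
  shows "has_K4_minor V E"
proof -
  obtain B :: "nat \<Rightarrow> 'a set" where
    B1: "\<forall>i<4. B i \<noteq> {} \<and> B i \<subseteq> V' \<and> connected_in E' (B i)" and
    B2: "\<forall>i<4. \<forall>j<4. i \<noteq> j \<longrightarrow> B i \<inter> B j = {} \<and> (\<exists>u\<in>B i. \<exists>v\<in>B j. {u, v} \<in> E')"
    using assms(1) unfolding has_K4_minor_def by blast
  have "\<forall>i<4. B i \<noteq> {} \<and> B i \<subseteq> V \<and> connected_in E (B i)"
    using B1 assms(2,3) connected_in_mono by blast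
  moreover have "\<forall>i<4. \<forall>j<4. i \<noteq> j \<longrightarrow> B i \<inter> B j = {} \<and> (\<exists>u\<in>B i. \<exists>v\<in>B j. {u, v} \<in> E)"
    using B2 assms(3) by blast
  ultimately show ?thesis
    unfolding has_K4_minor_def by blast
qed

lemma has_K4_minor_remove_vertices:
  "has_K4_minor (V - X) (remove_vertices X E) \<Longrightarrow> has_K4_minor V E"
  by (rule has_K4_minor_mono) (auto simp: remove_vertices_def)

lemma connected_in_path_segment:
  assumes path: "successively (\<lambda>u v. {u, v} \<in> E) P" and "l < r" "r \<le> length P"
  shows "connected_in E ((!) P ` {l..<r})"
proof -
  define R where "R = (\<lambda>x y. x \<in> (!) P ` {l..<r} \<and> y \<in> (!) P ` {l..<r} \<and> {x, y} \<in> E)"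
  have path_edge: "R (P ! t) (P ! Suc t) \<and> R (P ! Suc t) (P ! t)" if "l \<le> t" "Suc t < r" for t
    using successively_nth[OF path, of t] that \<open>r \<le> length P\<close>
    by (auto simp: R_def insert_commute)
  have from_l: "t < r \<longrightarrow> R\<^sup>*\<^sup>* (P ! l) (P ! t) \<and> R\<^sup>*\<^sup>* (P ! t) (P ! l)" if "l \<le> t" for t
    using that
  proof (induction t rule: dec_induct)
    case (step n)
    then show ?case
      using path_edge[of n] by (meson Suc_lessD converse_rtranclp_into_rtranclp rtranclp.rtrancl_into_rtrancl)
  qed simp
  show ?thesis
    unfolding connected_in_def R_def[symmetric]
  proof (intro ballI)
    fix u v assume "u \<in> (!) P ` {l..<r}" "v \<in> (!) P ` {l..<r}"
    then obtain s t where "u = P ! s" "v = P ! t" "s \<in> {l..<r}" "t \<in> {l..<r}" by blast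
    then show "R\<^sup>*\<^sup>* u v"
      using from_l[of s] from_l[of t] by (auto intro: rtranclp_trans)
  qed
qed

lemma path_segments_K4_minor:
  assumes path: "distinct P" "set P \<subseteq> V" "successively (\<lambda>u v. {u, v} \<in> E) P"
    and bounds: "0 < h" "h < i" "i < k" "k < n" "n \<le> length P"
    and chords: "adjacent_sets E ((!) P ` {0..<h}) ((!) P ` {i..<k})"
      "adjacent_sets E ((!) P ` {0..<h}) ((!) P ` {k..<n})"
      "adjacent_sets E ((!) P ` {h..<i}) ((!) P ` {k..<n})"
  shows "has_K4_minor V E"
proof (rule has_K4_minorI)
  have disjoint: "(!) P ` {s..<t} \<inter> (!) P ` {s'..<t'} = {}" if "t \<le> s'" "t' \<le> length P" for s t s' t'
  proof -
    have "P ! a \<noteq> P ! b" if "a < t" "s' \<le> b" "b < t'" for a b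
      using that \<open>t \<le> s'\<close> \<open>t' \<le> length P\<close> nth_eq_iff_index_eq[OF path(1)] by fastforce
    then show ?thesis by fastforce
  qed
  show "(!) P ` {0..<h} \<inter> (!) P ` {h..<i} = {}" "(!) P ` {0..<h} \<inter> (!) P ` {i..<k} = {}"
    "(!) P ` {0..<h} \<inter> (!) P ` {k..<n} = {}" "(!) P ` {h..<i} \<inter> (!) P ` {i..<k} = {}"
    "(!) P ` {h..<i} \<inter> (!) P ` {k..<n} = {}" "(!) P ` {i..<k} \<inter> (!) P ` {k..<n} = {}"
    using bounds by (auto intro!: disjoint)
  have consecutive: "adjacent_sets E ((!) P ` {s..<t}) ((!) P ` {t..<t'})"
    if "s < t" "t < t'" "t' \<le> length P" for s t t'
  proof -
    have "{P ! (t - 1), P ! t} \<in> E"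
      using successively_nth[OF path(3), of "t - 1"] that by simp
    moreover have "t - 1 \<in> {s..<t}" "t \<in> {t..<t'}"
      using that by auto
    ultimately show ?thesis
      unfolding adjacent_sets_def by blast
  qed
  show "adjacent_sets E ((!) P ` {0..<h}) ((!) P ` {h..<i})"
    "adjacent_sets E ((!) P ` {h..<i}) ((!) P ` {i..<k})"
    "adjacent_sets E ((!) P ` {i..<k}) ((!) P ` {k..<n})"
    using bounds by (auto intro!: consecutive)
  show "adjacent_sets E ((!) P ` {0..<h}) ((!) P ` {i..<k})"
    "adjacent_sets E ((!) P ` {0..<h}) ((!) P ` {k..<n})"
    "adjacent_sets E ((!) P ` {h..<i}) ((!) P ` {k..<n})"
    by (fact chords)+
  show "\<forall>B\<in>{(!) P ` {0..<h}, (!) P ` {h..<i}, (!) P ` {i..<k}, (!) P ` {k..<n}}.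
      B \<noteq> {} \<and> B \<subseteq> V \<and> connected_in E B"
    using bounds path(2) nth_mem by (auto intro!: connected_in_path_segment[OF path(3)])
qed

definition suppress :: "'a set set \<Rightarrow> 'a \<Rightarrow> 'a \<Rightarrow> 'a \<Rightarrow> 'a set set" where
  "suppress E x a b = remove_vertices {x} E \<union> {{a, b}}"

lemma in_suppress_iff: "e \<in> suppress E x a b \<longleftrightarrow> (e \<in> E \<and> x \<notin> e) \<or> e = {a, b}"
  by (auto simp: suppress_def remove_vertices_def)

lemma simple_graph_suppress:
  assumes "simple_graph V E" "{a, x} \<in> E" "{x, b} \<in> E" "a \<noteq> b"
  shows "simple_graph (V - {x}) (suppress E x a b)"
  using simple_graph_remove_vertices[OF assms(1), of "{x}"] simple_graph_edgeD[OF assms(1) assms(2)]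
    simple_graph_edgeD[OF assms(1) assms(3)] assms(4)
  unfolding suppress_def simple_graph_def by blast

lemma neighbors_suppress:
  assumes "v \<noteq> x"
  shows "neighbors (suppress E x a b) v =
    (neighbors E v - {x}) \<union> (if v = a then {b} else {}) \<union> (if v = b then {a} else {})"
  using assms unfolding neighbors_def in_suppress_iff by (auto simp: doubleton_eq_iff)

lemma neighbors_suppress_other:
  assumes "neighbors E x = {a, b}" "v \<notin> {x, a, b}"
  shows "neighbors (suppress E x a b) v = neighbors E v"
  using assms neighbors_suppress[of v x E a b] by (auto simp: in_neighbors_iff insert_commute)

lemma degree_suppress:
  assumes "simple_graph V E" "neighbors E x = {a, b}" "a \<noteq> b" "v \<noteq> x"
  shows "degree (suppress E x a b) v = degree E v - (if v \<in> {a, b} \<and> {a, b} \<in> E then 1 else 0)"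
proof (cases "v \<in> {a, b}")
  case True
  define w where "w = (if v = a then b else a)"
  have "{v, w} = {a, b}" "v \<noteq> w"
    using True assms(3) by (auto simp: w_def)
  have "x \<in> neighbors E v"
    using True neighbors_eq_pairD[OF assms(2)] by (auto simp: in_neighbors_iff)
  moreover have "neighbors (suppress E x a b) v = insert w (neighbors E v - {x})"
    using neighbors_suppress[OF assms(4)] True assms(3) by (auto simp: w_def)
  moreover have "w \<in> neighbors E v \<longleftrightarrow> {a, b} \<in> E"
    using \<open>{v, w} = {a, b}\<close> by (auto simp: in_neighbors_iff insert_commute)
  moreover have "w \<noteq> x"
    using True assms(2) self_notin_neighbors[OF assms(1), of x] by (auto simp: w_def)
  ultimately show ?thesis
    using True finite_neighbors[OF assms(1), of v] card_gt_0_iff[of "neighbors E v"]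
    by (auto simp: degree_def card_insert_if card_Diff_singleton)
next
  case False
  then show ?thesis
    using neighbors_suppress_other[OF assms(2)] assms(4) by (simp add: degree_def)
qed

lemma has_K4_minor_suppress:
  assumes "x \<in> V" "{a, x} \<in> E" "{x, b} \<in> E"
    and "has_K4_minor (V - {x}) (suppress E x a b)"
  shows "has_K4_minor V E"
proof -
  obtain B :: "nat \<Rightarrow> 'a set" where
    B1: "\<forall>i<4. B i \<noteq> {} \<and> B i \<subseteq> V - {x} \<and> connected_in (suppress E x a b) (B i)" and
    B2: "\<forall>i<4. \<forall>j<4. i \<noteq> j \<longrightarrow> B i \<inter> B j = {} \<and>
           (\<exists>u\<in>B i. \<exists>v\<in>B j. {u, v} \<in> suppress E x a b)"
    using assms(4) unfolding has_K4_minor_def by blast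
  define C where "C i = (if a \<in> B i then insert x (B i) else B i)" for i
  have edge_ab: "{a, x} \<in> E" "{x, a} \<in> E" "{b, x} \<in> E" "{x, b} \<in> E"
    using assms(2,3) by (auto simp: insert_commute)
  have C1: "C i \<noteq> {} \<and> C i \<subseteq> V \<and> connected_in E (C i)" if "i < 4" for i
  proof (intro conjI)
    show "C i \<noteq> {}" "C i \<subseteq> V"
      using B1 that assms(1) by (auto simp: C_def)
    define R where "R = (\<lambda>u v. u \<in> C i \<and> v \<in> C i \<and> {u, v} \<in> E)"
    have "R\<^sup>*\<^sup>* u v" if "u \<in> B i" "v \<in> B i" "{u, v} \<in> suppress E x a b" for u v
    proof (cases "{u, v} \<in> E")
      case True
      then show ?thesis
        using that by (auto simp: R_def C_def)
    next
      case False
      then have "u = a \<and> v = b \<or> u = b \<and> v = a"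
        using that(3) by (auto simp: in_suppress_iff doubleton_eq_iff)
      then have "R u x" "R x v"
        using that edge_ab by (auto simp: R_def C_def)
      then show ?thesis by auto
    qed
    then have walk_B: "R\<^sup>*\<^sup>* u v" if "u \<in> B i" "v \<in> B i" for u v
    proof -
      have "(\<lambda>u v. u \<in> B i \<and> v \<in> B i \<and> {u, v} \<in> suppress E x a b)\<^sup>*\<^sup>* u v"
        using B1 \<open>i < 4\<close> that unfolding connected_in_def by blast
      then show ?thesis
        by (induction rule: rtranclp_induct) (auto intro: rtranclp_trans \<open>\<And>u v. _ \<Longrightarrow> _ \<Longrightarrow> _ \<Longrightarrow> R\<^sup>*\<^sup>* u v\<close>)
    qed
    have back_and_forth: "\<exists>w\<in>B i. R\<^sup>*\<^sup>* u w \<and> R\<^sup>*\<^sup>* w u" if "u \<in> C i" for u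
    proof (cases "u \<in> B i")
      case False
      then have "u = x" "a \<in> B i"
        using that by (auto simp: C_def split: if_splits)
      then have "R u a" "R a u"
        using that edge_ab by (auto simp: R_def C_def)
      then show ?thesis
        using \<open>a \<in> B i\<close> by blast
    qed blast
    show "connected_in E (C i)"
      unfolding connected_in_def R_def[symmetric]
    proof (intro ballI)
      fix u v assume "u \<in> C i" "v \<in> C i"
      then obtain u' v' where "u' \<in> B i" "v' \<in> B i" "R\<^sup>*\<^sup>* u u'" "R\<^sup>*\<^sup>* v' v"
        using back_and_forth by meson
      then show "R\<^sup>*\<^sup>* u v"
        using walk_B by (meson rtranclp_trans)
    qed
  qed
  have C2: "C i \<inter> C j = {} \<and> (\<exists>u\<in>C i. \<exists>v\<in>C j. {u, v} \<in> E)"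
    if ij: "i < 4" "j < 4" "i \<noteq> j" for i j
  proof
    have "B i \<inter> B j = {}" "x \<notin> B i" "x \<notin> B j"
      using B1 B2 ij by auto
    then show "C i \<inter> C j = {}"
      by (auto simp: C_def)
    obtain u v where uv: "u \<in> B i" "v \<in> B j" "{u, v} \<in> suppress E x a b"
      using B2 ij by blast
    show "\<exists>u\<in>C i. \<exists>v\<in>C j. {u, v} \<in> E"
    proof (cases "{u, v} \<in> E")
      case False
      then have "u = a \<and> v = b \<or> u = b \<and> v = a"
        using uv(3) by (auto simp: in_suppress_iff doubleton_eq_iff)
      then show ?thesis
        using uv edge_ab by (auto simp: C_def)
    qed (use uv in \<open>auto simp: C_def\<close>)
  qed
  show ?thesis
    unfolding has_K4_minor_def by (intro exI[of _ C] conjI allI impI) (simp_all add: C1 C2)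
qed

definition pq_path :: "'a set \<Rightarrow> 'a set set \<Rightarrow> 'a \<Rightarrow> 'a \<Rightarrow> 'a list \<Rightarrow> bool" where
  "pq_path V E p q P \<longleftrightarrow> distinct P \<and> set P \<subseteq> V \<and> successively (\<lambda>u v. {u, v} \<in> E) P \<and>
     P \<noteq> [] \<and> hd P \<notin> {p, q} \<and> (set P \<inter> {p, q} \<noteq> {} \<longrightarrow> (\<exists>P'. P = P' @ [p, q] \<or> P = P' @ [q, p]))"

lemma pq_path_length_le: "pq_path V E p q P \<Longrightarrow> finite V \<Longrightarrow> length P \<le> card V"
  unfolding pq_path_def by (metis card_mono distinct_card)

lemma successively_edge_flip:
  "successively (\<lambda>u v. {v, u} \<in> E) P \<longleftrightarrow> successively (\<lambda>u v. {u, v} \<in> E) P"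
  by (simp add: insert_commute)

lemma longest_pq_path_neighbors:
  assumes sg: "simple_graph V E" and pq: "{p, q} \<in> E" and P: "pq_path V E p q P"
    and longest: "\<forall>P'. pq_path V E p q P' \<longrightarrow> length P' \<le> length P"
  shows "neighbors E (hd P) \<subseteq> set P"
proof
  fix u assume "u \<in> neighbors E (hd P)"
  then have edge: "{hd P, u} \<in> E" "{u, hd P} \<in> E"
    by (auto simp: in_neighbors_iff insert_commute)
  have path: "distinct P" "set P \<subseteq> V" "successively (\<lambda>u v. {u, v} \<in> E) P" "P \<noteq> []"
    "hd P \<notin> {p, q}" using P by (auto simp: pq_path_def)
  show "u \<in> set P"
  proof (rule ccontr)
    assume u: "u \<notin> set P"
    have "u \<in> V"
      using simple_graph_edgeD[OF sg edge(1)] by simp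
    have "\<exists>P'. pq_path V E p q P' \<and> length P < length P'"
    proof (cases "u \<in> {p, q}")
      case False
      then have "pq_path V E p q (u # P)"
        using P u \<open>u \<in> V\<close> edge(2) by (auto simp: pq_path_def successively_Cons)
      then show ?thesis by fastforce
    next
      case True
      then obtain u' where u': "{u, u'} = {p, q}"
        by blast
      have avoid: "set P \<inter> {p, q} = {}"
        using P u True by (auto simp: pq_path_def)
      have "{u, u'} \<in> E" "u \<noteq> u'" "u' \<in> V"
        using u' pq simple_graph_edgeD[OF sg pq] by auto
      moreover have "last P \<notin> {p, q}"
        using avoid path(4) last_in_set by blast
      ultimately have "pq_path V E p q (rev P @ [u, u'])"
        using path u avoid u' edge(1) \<open>u \<in> V\<close>
        by (auto simp: pq_path_def successively_append_iff successively_edge_flip hd_rev last_rev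
            doubleton_eq_iff insert_commute)
      then show ?thesis by fastforce
    qed
    then show False
      using longest by fastforce
  qed
qed

lemma longest_pq_path_chords:
  assumes sg: "simple_graph V E" and pq: "{p, q} \<in> E" and P: "pq_path V E p q P"
    and longest: "\<forall>P'. pq_path V E p q P' \<longrightarrow> length P' \<le> length P"
    and deg: "3 \<le> degree E (hd P)"
  obtains t1 t2 where "2 \<le> t1" "t1 < t2" "t2 < length P" "{P ! 0, P ! t1} \<in> E" "{P ! 0, P ! t2} \<in> E"
proof -
  have "P \<noteq> []"
    using P by (simp add: pq_path_def)
  then have hd: "hd P = P ! 0"
    by (simp add: hd_conv_nth)
  define N where "N = neighbors E (hd P) - {P ! 1}"
  have "card (neighbors E (hd P)) \<le> card N + 1"
    using finite_neighbors[OF sg] card_Diff_singleton_if[of "neighbors E (hd P)" "P ! 1"]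
    by (simp add: N_def split: if_splits)
  then have "\<not> card N \<le> Suc 0"
    using deg by (simp add: degree_def)
  moreover have "finite N"
    using finite_neighbors[OF sg] by (simp add: N_def)
  ultimately obtain v1 v2 where v: "v1 \<in> N" "v2 \<in> N" "v1 \<noteq> v2"
    using card_le_Suc0_iff_eq by blast
  have index: "\<exists>t. 2 \<le> t \<and> t < length P \<and> v = P ! t \<and> {P ! 0, P ! t} \<in> E" if "v \<in> N" for v
  proof -
    have "v \<in> set P"
      using that longest_pq_path_neighbors[OF sg pq P longest] by (auto simp: N_def)
    then obtain t where t: "t < length P" "v = P ! t"
      by (metis in_set_conv_nth)
    moreover have "t \<noteq> 0"
      using that t hd self_notin_neighbors[OF sg, of "P ! 0"] unfolding N_def by (metis DiffD1)
    moreover have "t \<noteq> 1"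
      using that t by (auto simp: N_def)
    moreover have "{P ! 0, P ! t} \<in> E"
      using that t hd by (auto simp: N_def in_neighbors_iff insert_commute)
    ultimately show ?thesis
      by (metis One_nat_def less_2_cases not_less)
  qed
  obtain s1 s2 where "2 \<le> s1" "s1 < length P" "{P ! 0, P ! s1} \<in> E" "v1 = P ! s1"
    "2 \<le> s2" "s2 < length P" "{P ! 0, P ! s2} \<in> E" "v2 = P ! s2"
    using index[OF v(1)] index[OF v(2)] by blast
  moreover have "s1 \<noteq> s2"
    using v(3) calculation by blast
  ultimately show ?thesis
    using that by (metis linorder_neqE_nat)
qed

lemma pq_path_rotate:
  assumes P: "pq_path V E p q P" and i: "2 \<le> i" "i + 2 \<le> length P"
    and chord: "{P ! 0, P ! i} \<in> E"
  shows "pq_path V E p q (rev (take i P) @ drop i P)"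
proof -
  define Q where "Q = rev (take i P) @ drop i P"
  have path: "distinct P" "set P \<subseteq> V" "successively (\<lambda>u v. {u, v} \<in> E) P" "P \<noteq> []"
    using P by (auto simp: pq_path_def)
  have "set Q = set P"
    by (metis Q_def append_take_drop_id set_append set_rev)
  moreover have "distinct Q"
    using path(1) by (simp add: Q_def set_take_disj_set_drop_if_distinct)
  moreover have "successively (\<lambda>u v. {u, v} \<in> E) Q"
  proof -
    have "last (rev (take i P)) = P ! 0" "hd (drop i P) = P ! i"
      using i path(4) by (simp_all add: last_rev hd_take hd_conv_nth hd_drop_conv_nth)
    moreover have "successively (\<lambda>u v. {u, v} \<in> E) (take i P)"
      "successively (\<lambda>u v. {u, v} \<in> E) (drop i P)"
      using path(3) by (metis append_take_drop_id successively_append_iff)+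
    ultimately show ?thesis
      using chord i
      unfolding Q_def by (simp add: successively_append_iff successively_edge_flip)
  qed
  moreover have hdQ: "hd Q = P ! (i - 1)"
    using i by (auto simp: Q_def hd_append hd_rev last_conv_nth)
  moreover have "hd Q \<notin> {p, q} \<and> (set Q \<inter> {p, q} \<noteq> {} \<longrightarrow> (\<exists>Q'. Q = Q' @ [p, q] \<or> Q = Q' @ [q, p]))"
  proof (cases "set P \<inter> {p, q} = {}")
    case True
    have "hd Q \<in> set P"
      using hdQ i by simp
    with True show ?thesis
      using \<open>set Q = set P\<close> by blast
  next
    case False
    then obtain P' where P': "P = P' @ [p, q] \<or> P = P' @ [q, p]"
      using P by (auto simp: pq_path_def)
    then have "i \<le> length P'" "p \<notin> set P'" "q \<notin> set P'"
      using i path(1) by auto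
    then have "P ! (i - 1) \<in> set P' - {p, q}"
      using P' i by (auto simp: nth_append simp del: nth_mem intro!: nth_mem)
    moreover have "Q = (rev (take i P') @ drop i P') @ [p, q] \<or> Q = (rev (take i P') @ drop i P') @ [q, p]"
      using P' \<open>i \<le> length P'\<close> by (auto simp: Q_def)
    ultimately show ?thesis
      using hdQ by (metis DiffD2)
  qed
  ultimately show ?thesis
    using path by (auto simp: pq_path_def Q_def[symmetric])
qed

theorem has_K4_minor_if_high_degree_off_edge:
  assumes sg: "simple_graph V E" and pq: "{p, q} \<in> E" and w: "w \<in> V - {p, q}"
    and high: "\<forall>v\<in>V - {p, q}. 3 \<le> degree E v"
  shows "has_K4_minor V E"
proof -
  define first_chord where
    "first_chord P = (LEAST t. 2 \<le> t \<and> t < length P \<and> {P ! 0, P ! t} \<in> E)" for P :: "'a list"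
  obtain P where P: "pq_path V E p q P"
    and longest: "\<forall>P'. pq_path V E p q P' \<longrightarrow> length P' \<le> length P"
    and least: "\<forall>P'. pq_path V E p q P' \<and> length P' = length P \<longrightarrow> first_chord P \<le> first_chord P'"
  proof -
    have "pq_path V E p q [w]"
      using w by (simp add: pq_path_def)
    moreover have "\<forall>P. pq_path V E p q P \<longrightarrow> length P < Suc (card V)"
      using pq_path_length_le[OF _ simple_graph_finite[OF sg]] less_Suc_eq_le by blast
    ultimately obtain P0 where "pq_path V E p q P0" "\<forall>P'. pq_path V E p q P' \<longrightarrow> length P' \<le> length P0"
      using ex_has_greatest_nat[of "pq_path V E p q" "[w]" length] by blast
    then show ?thesis
      using that ex_has_least_nat[of "\<lambda>P. pq_path V E p q P \<and> length P = length P0" P0 first_chord]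
      by (metis (no_types, lifting))
  qed
  have path: "distinct P" "set P \<subseteq> V" "successively (\<lambda>u v. {u, v} \<in> E) P" "P \<noteq> []"
    "hd P \<notin> {p, q}" using P by (auto simp: pq_path_def)
  have "hd P \<in> V - {p, q}"
    using path(2,4,5) hd_in_set by blast
  then have "3 \<le> degree E (hd P)"
    using high by blast
  then obtain t1 t2 where t: "2 \<le> t1" "t1 < t2" "t2 < length P" "{P ! 0, P ! t1} \<in> E" "{P ! 0, P ! t2} \<in> E"
    using longest_pq_path_chords[OF sg pq P longest] by blast
  define i where "i = first_chord P"
  have i: "2 \<le> i" "i < length P" "{P ! 0, P ! i} \<in> E"
    using LeastI[of "\<lambda>t. 2 \<le> t \<and> t < length P \<and> {P ! 0, P ! t} \<in> E" t1] t
    by (simp_all add: i_def first_chord_def)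
  have "i \<le> t1"
    unfolding i_def first_chord_def by (rule Least_le) (use t in simp)
  define Q where "Q = rev (take i P) @ drop i P"
  have Q: "pq_path V E p q Q"
    unfolding Q_def using pq_path_rotate[OF P] i \<open>i \<le> t1\<close> t by simp
  have Q_nth: "Q ! k = P ! (i - Suc k)" if "k < i" for k
    using that i by (simp add: Q_def nth_append rev_nth min_def)
  have length_Q: "length Q = length P"
    using i by (simp add: Q_def)
  define u where "u = P ! (i - 1)"
  have hd_Q: "hd Q = u"
    using Q_nth[of 0] i Q by (simp add: u_def pq_path_def hd_conv_nth)
  have "u \<in> V"
    using path(2) i by (simp add: u_def subset_iff)
  moreover have "u \<notin> {p, q}"
    using Q hd_Q by (simp add: pq_path_def)
  ultimately have "u \<in> V - {p, q}"
    by blast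
  then have "3 \<le> degree E u"
    using high by blast
  moreover have "neighbors E u \<subseteq> set P"
    using longest_pq_path_neighbors[OF sg pq Q] longest length_Q hd_Q
    by (metis Q_def append_take_drop_id set_append set_rev)
  ultimately obtain m where m: "m < length P" "{u, P ! m} \<in> E" "P ! m \<noteq> P ! (i - 2)" "P ! m \<noteq> P ! i"
  proof -
    have "card (neighbors E u) - card {P ! (i - 2), P ! i} \<le> card (neighbors E u - {P ! (i - 2), P ! i})"
      by (rule diff_card_le_card_Diff) simp
    moreover have "card {P ! (i - 2), P ! i} \<le> 2"
      by (simp add: card_insert_le_m1)
    ultimately have "neighbors E u - {P ! (i - 2), P ! i} \<noteq> {}"
      using \<open>3 \<le> degree E u\<close> unfolding degree_def by fastforce
    then obtain v where v: "v \<in> neighbors E u" "v \<noteq> P ! (i - 2)" "v \<noteq> P ! i"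
      by blast
    then obtain m where "m < length P" "v = P ! m"
      using \<open>neighbors E u \<subseteq> set P\<close> in_set_conv_nth[of v P] by blast
    then show ?thesis
      using that v by (simp add: in_neighbors_iff insert_commute)
  qed
  have "P ! m \<noteq> u"
    using m(2) simple_graph_edgeD[OF sg] by blast
  have "i < m"
  proof (rule ccontr)
    assume "\<not> i < m"
    moreover have "m \<noteq> i" "m \<noteq> i - 1" "m \<noteq> i - 2"
      using m(3,4) \<open>P ! m \<noteq> u\<close> by (auto simp: u_def)
    ultimately have "m + 3 \<le> i"
      by arith
    define k where "k = i - Suc m"
    have "2 \<le> k" "k < i" "Q ! k = P ! m" "Q ! 0 = u"
      using \<open>m + 3 \<le> i\<close> Q_nth[of k] Q_nth[of 0] by (auto simp: k_def u_def)
    then have "first_chord Q \<le> k"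
      unfolding first_chord_def using m(2) i(2) length_Q by (intro Least_le) simp
    moreover have "first_chord P \<le> first_chord Q"
      using least Q length_Q by blast
    ultimately show False
      using \<open>k < i\<close> by (simp add: i_def)
  qed
  show ?thesis
  proof (rule path_segments_K4_minor[OF path(1-3), of 1 i "min m t2" "Suc (max m t2)"])
    have "0 \<in> {0..<1::nat}" "i \<in> {i..<min m t2}" "t2 \<in> {min m t2..<Suc (max m t2)}"
      "i - 1 \<in> {1..<i}" "m \<in> {min m t2..<Suc (max m t2)}"
      using \<open>i < m\<close> \<open>i \<le> t1\<close> t i by auto
    then show "adjacent_sets E ((!) P ` {0..<1}) ((!) P ` {i..<min m t2})"
      "adjacent_sets E ((!) P ` {0..<1}) ((!) P ` {min m t2..<Suc (max m t2)})"
      "adjacent_sets E ((!) P ` {1..<i}) ((!) P ` {min m t2..<Suc (max m t2)})"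
      using i(3) t(5) m(2) unfolding adjacent_sets_def u_def by blast+
  qed (use \<open>i < m\<close> \<open>i \<le> t1\<close> t i m in auto)
qed

corollary low_degree_vertex_off_edge:
  assumes "simple_graph V E" "\<not> has_K4_minor V E" "{p, q} \<in> E" "w \<in> V - {p, q}"
  obtains v where "v \<in> V - {p, q}" "degree E v \<le> 2"
  using has_K4_minor_if_high_degree_off_edge[OF assms(1,3,4)] assms(2) not_less_eq_eq by fastforce

corollary subset_edge_if_high_degree:
  assumes "simple_graph V E" "\<not> has_K4_minor V E" "{p, q} \<in> E"
    and "\<forall>v\<in>V - {p, q}. 3 \<le> degree E v"
  shows "V \<subseteq> {p, q}"
  using has_K4_minor_if_high_degree_off_edge[OF assms(1,3) _ assms(4)] assms(2) by blast

lemma subset_edge_after_suppress: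
  assumes sg: "simple_graph W H" and nk: "\<not> has_K4_minor W H"
    and z: "z \<in> W" "neighbors H z = {e, g}" "e \<noteq> g"
    and pq: "{p, q} \<in> suppress H z e g"
    and high: "\<forall>v\<in>W - {z} - {p, q}. 3 \<le> degree (suppress H z e g) v"
  shows "W - {z} \<subseteq> {p, q}"
proof (rule subset_edge_if_high_degree[OF _ _ pq high])
  show "simple_graph (W - {z}) (suppress H z e g)"
    using simple_graph_suppress[OF sg neighbors_eq_pairD(1,4)[OF z(2)] z(3)] .
  show "\<not> has_K4_minor (W - {z}) (suppress H z e g)"
    using has_K4_minor_suppress[OF z(1) neighbors_eq_pairD(1,4)[OF z(2)]] nk by blast
qed

lemma card_le_3_eq:
  assumes "finite L" "card L \<le> 3" "{x, y, z} \<subseteq> L" "distinct [x, y, z]"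
  shows "L = {x, y, z}"
proof -
  have "card {x, y, z} = 3"
    using assms(4) by simp
  then show ?thesis
    using card_subset_eq[OF assms(1,3)] card_mono[OF assms(1,3)] assms(2) by simp
qed

lemma card_le_3_not_distinct:
  assumes "finite L" "card L \<le> 3" "{a, b, c, d} \<subseteq> L"
  shows "\<not> distinct [a, b, c, d]"
proof
  assume "distinct [a, b, c, d]"
  then have "card {a, b, c, d} = 4"
    by simp
  then show False
    using card_mono[OF assms(1,3)] assms(2) by simp
qed

lemma degree_two_other_neighborE:
  assumes "degree E x = 2" "y \<in> neighbors E x"
  obtains a where "neighbors E x = {a, y}" "a \<noteq> y"
proof -
  obtain a0 b0 where N: "a0 \<noteq> b0" "neighbors E x = {a0, b0}"
    using degree_two_neighborsE[OF assms(1)] by blast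
  show thesis
  proof (cases "a0 = y")
    case True
    then show ?thesis
      using that[of b0] N by (simp add: insert_commute)
  next
    case False
    then show ?thesis
      using that[of a0] N assms(2) by auto
  qed
qed

lemma no_adjacent_degree_two:
  assumes sg: "simple_graph V E" and tf: "triangle_free E" and nk: "\<not> has_K4_minor V E"
    and min2: "\<forall>v\<in>V. 2 \<le> degree E v"
    and few: "card {v\<in>V. degree E v \<le> 2} \<le> 3"
    and xy: "{x, y} \<in> E" and deg: "degree E x = 2" "degree E y = 2"
  shows False
proof -
  define L where "L = {v\<in>V. degree E v \<le> 2}"
  have L: "finite L" "card L \<le> 3"
    using few simple_graph_finite[OF sg] by (simp_all add: L_def)
  have x: "x \<in> V" "x \<noteq> y" "y \<in> V"
    using simple_graph_edgeD[OF sg xy] by auto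
  obtain a where Nx: "neighbors E x = {a, y}" "a \<noteq> y"
    using degree_two_other_neighborE[OF deg(1), of y] xy by (auto simp: in_neighbors_iff insert_commute)
  obtain b where Ny: "neighbors E y = {x, b}" "b \<noteq> x"
    using degree_two_other_neighborE[OF deg(2), of x] xy by (auto simp: in_neighbors_iff insert_commute)
  note edges = neighbors_eq_pairD[OF Nx(1)] neighbors_eq_pairD[OF Ny(1)]
  have ay: "{a, y} \<notin> E" and xb: "{x, b} \<notin> E"
    using triangle_free_neighbors_pair[OF tf] Nx Ny by blast+
  have a: "a \<in> V" "a \<noteq> x" and b: "b \<in> V" "b \<noteq> y"
    using simple_graph_edgeD[OF sg edges(1)] simple_graph_edgeD[OF sg edges(7)] by auto
  have "a \<noteq> b"
    using ay edges(7) by (auto simp: insert_commute)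
  define G1 where "G1 = suppress E x a y"
  define G2 where "G2 = suppress G1 y a b"
  have Ny1: "neighbors G1 y = {a, b}"
    using neighbors_suppress[of y x E a y] Ny x(2) \<open>a \<noteq> y\<close> by (auto simp: G1_def)
  have sg1: "simple_graph (V - {x}) G1"
    using simple_graph_suppress[OF sg edges(1,4) Nx(2)] by (simp add: G1_def)
  have sg2: "simple_graph (V - {x} - {y}) G2"
    using simple_graph_suppress[OF sg1 neighbors_eq_pairD(1,4)[OF Ny1] \<open>a \<noteq> b\<close>] by (simp add: G2_def)
  have nk2: "\<not> has_K4_minor (V - {x} - {y}) G2"
    using nk has_K4_minor_suppress[OF x(1) edges(1,4)] x(2,3)
      has_K4_minor_suppress[of y "V - {x}" a G1 b] neighbors_eq_pairD(1,4)[OF Ny1]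
    by (auto simp: G1_def G2_def)
  have ab2: "{a, b} \<in> G2"
    by (simp add: G2_def in_suppress_iff)
  have ab1: "{a, b} \<in> G1 \<longleftrightarrow> {a, b} \<in> E"
    using a(2) \<open>a \<noteq> b\<close> b(2) Ny(2) by (auto simp: G1_def in_suppress_iff doubleton_eq_iff)
  have deg2: "degree G2 v = degree E v - (if v \<in> {a, b} \<and> {a, b} \<in> E then 1 else 0)"
    if "v \<in> V - {x} - {y}" for v
    using that degree_suppress[OF sg1 Ny1 \<open>a \<noteq> b\<close>, of v] degree_suppress[OF sg Nx, of v] ay ab1
    by (simp add: G1_def G2_def)
  have N2: "neighbors G2 v = neighbors E v" if "v \<notin> {x, y, a, b}" for v
    using that neighbors_suppress_other[OF Nx(1), of v] neighbors_suppress_other[OF Ny1, of v]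
    by (simp add: G1_def G2_def)
  have "y \<in> L" "x \<in> L"
    using x deg by (simp_all add: L_def)
  obtain z where z: "z \<in> V - {x} - {y} - {a, b}" "degree E z \<le> 2"
  proof -
    have "\<exists>w. w \<in> V - {x} - {y} - {a, b}"
    proof (rule ccontr)
      assume "\<nexists>w. w \<in> V - {x} - {y} - {a, b}"
      then have Na: "neighbors E a \<subseteq> {x, b}" "neighbors E b \<subseteq> {y, a}"
        using neighbors_subset[OF sg] self_notin_neighbors[OF sg] ay xb
        by (fastforce simp: in_neighbors_iff insert_commute)+
      show False
      proof (cases "{a, b} \<in> E")
        case True
        have "{x, y, a, b} \<subseteq> L"
          using \<open>x \<in> L\<close> \<open>y \<in> L\<close> a b Na degree_le_two[OF sg] by (auto simp: L_def)
        then show False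
          using card_le_3_not_distinct[OF L, of x y a b] a b x \<open>a \<noteq> b\<close> \<open>a \<noteq> y\<close> \<open>b \<noteq> x\<close>
          by auto
      next
        case False
        then have "neighbors E a \<subseteq> {x}"
          using Na(1) by (auto simp: in_neighbors_iff insert_commute)
        then show False
          using degree_le_one[OF sg] min2 a(1) by fastforce
      qed
    qed
    then obtain z where "z \<in> V - {x} - {y} - {a, b}" "degree G2 z \<le> 2"
      using low_degree_vertex_off_edge[OF sg2 nk2 ab2] by blast
    then show ?thesis
      using that deg2 by fastforce
  qed
  have "z \<in> L"
    using z by (simp add: L_def)
  then have L_eq: "L = {x, y, z}"
    using card_le_3_eq[OF L, of x y z] \<open>x \<in> L\<close> \<open>y \<in> L\<close> x(2) z(1) by auto
  obtain e g where Nz: "neighbors E z = {e, g}" "e \<noteq> g"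
    using z min2 degree_two_neighborsE by (metis DiffD1 le_antisym)
  have eg: "{e, g} \<notin> E" "e \<in> V - {x, y, z}" "g \<in> V - {x, y, z}"
    using triangle_free_neighbors_pair[OF tf Nz(1)] neighbors_eq_pairD[OF Nz(1)] z Nx(1) Ny(1)
      simple_graph_edgeD[OF sg] by (auto simp: in_neighbors_iff insert_commute)
  have z2: "z \<in> V - {x} - {y}" "neighbors G2 z = {e, g}"
    using N2[of z] z Nz by auto
  have high: "3 \<le> degree E v" if "v \<in> V - {x, y, z}" for v
  proof -
    have "v \<notin> L"
      using that L_eq by blast
    then show ?thesis
      using that by (simp add: L_def)
  qed
  show False
  proof (cases "{a, b} \<in> E")
    case False
    have "V - {x} - {y} - {z} \<subseteq> {e, g}"
    proof (rule subset_edge_after_suppress[OF sg2 nk2 z2 Nz(2)])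
      show "\<forall>v\<in>V - {x} - {y} - {z} - {e, g}. 3 \<le> degree (suppress G2 z e g) v"
        using degree_suppress[OF sg2 z2(2) Nz(2)] deg2 high False by auto
    qed (simp add: in_suppress_iff)
    moreover have "a \<in> V - {x} - {y} - {z}" "b \<in> V - {x} - {y} - {z}"
      using a b z(1) \<open>a \<noteq> y\<close> Ny(2) by auto
    ultimately have "a \<in> {e, g}" "b \<in> {e, g}"
      by blast+
    then have "{a, b} = {e, g}"
      using \<open>a \<noteq> b\<close> by blast
    have "neighbors E a \<subseteq> {x, z}"
    proof
      fix u assume u: "u \<in> neighbors E a"
      then have "u \<in> V" "u \<noteq> a" "u \<noteq> b" "u \<noteq> y"
        using neighbors_subset[OF sg, of a] self_notin_neighbors[OF sg, of a] False ay
        by (auto simp: in_neighbors_iff insert_commute)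
      with \<open>V - {x} - {y} - {z} \<subseteq> {e, g}\<close> \<open>{a, b} = {e, g}\<close> show "u \<in> {x, z}"
        by blast
    qed
    then have "a \<in> L"
      using degree_le_two[OF sg] a(1) by (simp add: L_def)
    then show False
      using L_eq a(2) \<open>a \<noteq> y\<close> z(1) by auto
  next
    case True
    then have "{e, g} \<notin> G2"
      using eg(1) \<open>{a, b} \<in> E\<close> eg(2) by (auto simp: G2_def G1_def in_suppress_iff)
    have "V - {x} - {y} - {z} \<subseteq> {a, b}"
    proof (rule subset_edge_after_suppress[OF sg2 nk2 z2 Nz(2)])
      show "{a, b} \<in> suppress G2 z e g"
        using ab2 z(1) by (simp add: in_suppress_iff)
      show "\<forall>v\<in>V - {x} - {y} - {z} - {a, b}. 3 \<le> degree (suppress G2 z e g) v"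
        using degree_suppress[OF sg2 z2(2) Nz(2)] deg2 high \<open>{e, g} \<notin> G2\<close> by auto
    qed
    then have "{e, g} = {a, b}"
      using eg(2,3) Nz(2) by auto
    then show False
      using True eg(1) by simp
  qed
qed

lemma K23_if_degree_two_independent:
  assumes sg: "simple_graph V E" and tf: "triangle_free E" and nk: "\<not> has_K4_minor V E"
    and min2: "\<forall>v\<in>V. 2 \<le> degree E v"
    and few: "card {v\<in>V. degree E v \<le> 2} \<le> 3"
    and indep: "\<forall>u\<in>V. \<forall>v\<in>V. degree E u \<le> 2 \<longrightarrow> degree E v \<le> 2 \<longrightarrow> {u, v} \<notin> E"
    and x: "x \<in> V" "degree E x \<le> 2"
  obtains y z a b where "V = {x, y, z, a, b}" "distinct [x, y, z, a, b]"
    "neighbors E x = {a, b}" "neighbors E y = {a, b}" "neighbors E z = {a, b}"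
proof -
  define L where "L = {v\<in>V. degree E v \<le> 2}"
  have L: "finite L" "card L \<le> 3"
    using few simple_graph_finite[OF sg] by (simp_all add: L_def)
  have deg2: "degree E v = 2" if "v \<in> L" for v
    using that min2 by (auto simp: L_def)
  have outside_L: "u \<in> V - L" if "v \<in> L" "u \<in> neighbors E v" for u v
  proof -
    have "u \<in> V" "{u, v} \<in> E"
      using that(2) neighbors_subset[OF sg, of v] by (auto simp: in_neighbors_iff)
    then show ?thesis
      using that(1) indep by (auto simp: L_def)
  qed
  have high: "3 \<le> degree E v" if "v \<in> V - L" for v
    using that by (auto simp: L_def)
  have "x \<in> L"
    using x by (simp add: L_def)
  obtain a b where Nx: "neighbors E x = {a, b}" "a \<noteq> b"
    using degree_two_neighborsE[OF deg2[OF \<open>x \<in> L\<close>]] by blast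
  have ab: "a \<in> V - L" "b \<in> V - L" "{a, b} \<notin> E"
    using outside_L[OF \<open>x \<in> L\<close>] Nx triangle_free_neighbors_pair[OF tf Nx(1)] by auto
  define G1 where "G1 = suppress E x a b"
  have sg1: "simple_graph (V - {x}) G1"
    using simple_graph_suppress[OF sg neighbors_eq_pairD(1,4)[OF Nx(1)] Nx(2)] by (simp add: G1_def)
  have nk1: "\<not> has_K4_minor (V - {x}) G1"
    using nk has_K4_minor_suppress[OF x(1) neighbors_eq_pairD(1,4)[OF Nx(1)]] by (auto simp: G1_def)
  have deg_G1: "degree G1 v = degree E v" if "v \<noteq> x" for v
    using degree_suppress[OF sg Nx that] ab(3) by (simp add: G1_def)
  have ab1: "{a, b} \<in> G1"
    by (simp add: G1_def in_suppress_iff)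
  obtain y where y: "y \<in> V - {x} - {a, b}" "degree E y \<le> 2"
  proof -
    have "\<exists>w. w \<in> V - {x} - {a, b}"
    proof (rule ccontr)
      assume "\<nexists>w. w \<in> V - {x} - {a, b}"
      then have "neighbors E a \<subseteq> {x}"
        using neighbors_subset[OF sg, of a] self_notin_neighbors[OF sg, of a] ab(3)
        by (fastforce simp: in_neighbors_iff insert_commute)
      then show False
        using degree_le_one[OF sg] min2 ab(1) by fastforce
    qed
    then show ?thesis
      using that low_degree_vertex_off_edge[OF sg1 nk1 ab1] deg_G1 by (metis Diff_iff insertCI)
  qed
  have "y \<in> L"
    using y by (simp add: L_def)
  obtain c d where Ny: "neighbors E y = {c, d}" "c \<noteq> d"
    using degree_two_neighborsE[OF deg2[OF \<open>y \<in> L\<close>]] by blast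
  have cd: "c \<in> V - L" "d \<in> V - L" "{c, d} \<notin> E"
    using outside_L[OF \<open>y \<in> L\<close>] Ny triangle_free_neighbors_pair[OF tf Ny(1)] by auto
  have Ny1: "neighbors G1 y = {c, d}"
    using neighbors_suppress_other[OF Nx(1), of y] y Ny by (simp add: G1_def)
  define G2 where "G2 = suppress G1 y c d"
  have sg2: "simple_graph (V - {x} - {y}) G2"
    using simple_graph_suppress[OF sg1 neighbors_eq_pairD(1,4)[OF Ny1] Ny(2)] by (simp add: G2_def)
  have nk2: "\<not> has_K4_minor (V - {x} - {y}) G2"
    using nk1 has_K4_minor_suppress[of y "V - {x}" c G1 d] neighbors_eq_pairD(1,4)[OF Ny1] y
    by (auto simp: G2_def)
  have ab2: "{a, b} \<in> G2"
    using ab1 y by (simp add: G2_def in_suppress_iff)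
  have cd1: "{c, d} \<in> G1 \<longleftrightarrow> {c, d} = {a, b}"
    using cd(3) by (auto simp: G1_def in_suppress_iff)
  have deg_G2: "degree G2 v = degree E v - (if v \<in> {c, d} \<and> {c, d} = {a, b} then 1 else 0)"
    if "v \<in> V - {x} - {y}" for v
    using that degree_suppress[OF sg1 Ny1 Ny(2), of v] deg_G1[of v] cd1 by (simp add: G2_def)
  have in_G2: "e \<in> G2 \<longleftrightarrow> e = {a, b} \<or> e = {c, d}" if "e \<notin> E" for e
    using that y by (auto simp: G2_def G1_def in_suppress_iff)
  obtain z where z: "z \<in> V - {x} - {y} - {a, b}" "degree G2 z \<le> 2"
  proof -
    have "\<exists>w. w \<in> V - {x} - {y} - {a, b}"
    proof (rule ccontr)
      assume none: "\<nexists>w. w \<in> V - {x} - {y} - {a, b}"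
      then have "{c, d} = {a, b}"
        using cd \<open>x \<in> L\<close> \<open>y \<in> L\<close> Ny(2) ab by blast
      have "neighbors E a \<subseteq> {x, y}"
        using none neighbors_subset[OF sg, of a] self_notin_neighbors[OF sg, of a] ab(3)
        by (fastforce simp: in_neighbors_iff insert_commute)
      then show False
        using degree_le_two[OF sg] ab(1) by (auto simp: L_def)
    qed
    then show ?thesis
      using that low_degree_vertex_off_edge[OF sg2 nk2 ab2] by blast
  qed
  have "z \<in> L"
    using z deg_G2[of z] by (auto simp: L_def split: if_splits)
  then have L_eq: "L = {x, y, z}"
    using card_le_3_eq[OF L, of x y z] \<open>x \<in> L\<close> \<open>y \<in> L\<close> y(1) z(1) by auto
  have high_E: "3 \<le> degree E v" if "v \<in> V - {x} - {y} - {z}" for v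
    using that high L_eq by blast
  obtain e g where Nz: "neighbors E z = {e, g}" "e \<noteq> g"
    using degree_two_neighborsE[OF deg2[OF \<open>z \<in> L\<close>]] by blast
  have eg: "e \<in> V - L" "g \<in> V - L" "{e, g} \<notin> E"
    using outside_L[OF \<open>z \<in> L\<close>] Nz triangle_free_neighbors_pair[OF tf Nz(1)] by auto
  have z2: "z \<in> V - {x} - {y}" "neighbors G2 z = {e, g}"
    using z neighbors_suppress_other[OF Nx(1), of z] neighbors_suppress_other[OF Ny1, of z]
      \<open>z \<in> L\<close> cd(1,2) Nz(1) by (auto simp: G2_def G1_def)
  show thesis
  proof (cases "{c, d} = {a, b}")
    case False
    have "V - {x} - {y} - {z} \<subseteq> {e, g}"
    proof (rule subset_edge_after_suppress[OF sg2 nk2 z2 Nz(2)])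
      show "\<forall>v\<in>V - {x} - {y} - {z} - {e, g}. 3 \<le> degree (suppress G2 z e g) v"
        using degree_suppress[OF sg2 z2(2) Nz(2)] deg_G2 high_E False by auto
    qed (simp add: in_suppress_iff)
    moreover have "{a, b, c, d} \<subseteq> V - {x} - {y} - {z}"
      using ab cd L_eq by blast
    ultimately have "{a, b} = {e, g}" "{c, d} = {e, g}"
      using Nx(2) Ny(2) by blast+
    with False show thesis
      by simp
  next
    case True
    have "{e, g} \<in> G2 \<Longrightarrow> {e, g} = {a, b}"
      using in_G2[OF eg(3)] True by simp
    have "V - {x} - {y} - {z} \<subseteq> {a, b}"
    proof (rule subset_edge_after_suppress[OF sg2 nk2 z2 Nz(2)])
      show "{a, b} \<in> suppress G2 z e g"
        using ab2 z(1) by (simp add: in_suppress_iff)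
      show "\<forall>v\<in>V - {x} - {y} - {z} - {a, b}. 3 \<le> degree (suppress G2 z e g) v"
        using degree_suppress[OF sg2 z2(2) Nz(2)] deg_G2 high_E True
          \<open>{e, g} \<in> G2 \<Longrightarrow> {e, g} = {a, b}\<close> by auto
    qed
    moreover have "{e, g} \<subseteq> V - {x} - {y} - {z}"
      using eg L_eq by blast
    ultimately have "{e, g} = {a, b}"
      using Nx(2) Nz(2) by blast
    have "V = {x, y, z, a, b}"
      using \<open>V - {x} - {y} - {z} \<subseteq> {a, b}\<close> x(1) y(1) z(1) ab by blast
    moreover have "distinct [x, y, z, a, b]"
      using \<open>x \<in> L\<close> \<open>y \<in> L\<close> \<open>z \<in> L\<close> ab Nx(2) y(1) z(1) by auto
    ultimately show thesis
      using that[of y z a b] Nx(1) Ny(1) Nz(1) True \<open>{e, g} = {a, b}\<close> by simp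
  qed
qed

theorem K23_if_few_degree_two:
  assumes sg: "simple_graph V E" and tf: "triangle_free E" and nk: "\<not> has_K4_minor V E"
    and "V \<noteq> {}" and min2: "\<forall>v\<in>V. 2 \<le> degree E v"
    and few: "card {v\<in>V. degree E v \<le> 2} \<le> 3"
  obtains x y z a b where "V = {x, y, z, a, b}" "distinct [x, y, z, a, b]"
    "neighbors E x = {a, b}" "neighbors E y = {a, b}" "neighbors E z = {a, b}"
proof -
  obtain v where v: "v \<in> V"
    using \<open>V \<noteq> {}\<close> by blast
  then have "\<not> card (neighbors E v) \<le> Suc 0"
    using min2 by (auto simp: degree_def)
  then obtain u w where "u \<in> neighbors E v" "w \<in> neighbors E v" "u \<noteq> w"
    using card_le_Suc0_iff_eq[OF finite_neighbors[OF sg]] by blast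
  then have "{v, u} \<in> E" "w \<in> V - {v, u}"
    using neighbors_subset[OF sg, of v] self_notin_neighbors[OF sg, of v]
    by (auto simp: in_neighbors_iff insert_commute)
  then obtain x where x: "x \<in> V" "degree E x \<le> 2"
    using low_degree_vertex_off_edge[OF sg nk] by blast
  have "\<forall>u\<in>V. \<forall>v\<in>V. degree E u \<le> 2 \<longrightarrow> degree E v \<le> 2 \<longrightarrow> {u, v} \<notin> E"
  proof (intro ballI impI)
    fix u v assume "u \<in> V" "v \<in> V" "degree E u \<le> 2" "degree E v \<le> 2"
    then have "degree E u = 2" "degree E v = 2"
      using min2 by (simp_all add: le_antisym)
    then show "{u, v} \<notin> E"
      using no_adjacent_degree_two[OF sg tf nk min2 few] by blast
  qed
  then show thesis
    using K23_if_degree_two_independent[OF sg tf nk min2 few _ x, of thesis] that by blast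
qed

definition reducible_C4 :: "'a set \<Rightarrow> 'a set set \<Rightarrow> ('a \<Rightarrow> nat) \<Rightarrow> 'a \<Rightarrow> 'a \<Rightarrow> 'a \<Rightarrow> 'a \<Rightarrow> bool" where
  "reducible_C4 V E f a p b q \<longleftrightarrow> {a, p, b, q} \<subseteq> V \<and> distinct [a, p, b, q] \<and>
     {a, p} \<in> E \<and> {p, b} \<in> E \<and> {b, q} \<in> E \<and> {q, a} \<in> E \<and> (\<forall>v\<in>{a, p, b, q}. degree E v \<le> f v)"

definition bound_221 :: "'a set \<Rightarrow> ('a \<Rightarrow> nat) \<Rightarrow> bool" where
  "bound_221 V f \<longleftrightarrow> (\<forall>v\<in>V. 1 \<le> f v) \<and> card {v\<in>V. f v < 2} \<le> 1 \<and> card {v\<in>V. f v < 3} \<le> 3"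

lemma bound_221_subset:
  assumes "bound_221 V f" "V' \<subseteq> V" "finite V"
  shows "bound_221 V' f"
proof -
  have "card {v\<in>V'. f v < k} \<le> card {v\<in>V. f v < k}" for k
    using assms(2,3) by (intro card_mono) auto
  then show ?thesis
    using assms(1,2) unfolding bound_221_def by (meson le_trans subsetD)
qed

lemma two_of_three_outside:
  assumes "finite T" "card T \<le> 1" "distinct [x, y, z]"
  obtains u w where "u \<in> {x, y, z}" "w \<in> {x, y, z}" "u \<noteq> w" "u \<notin> T" "w \<notin> T"
proof -
  have single: "s = t" if "s \<in> T" "t \<in> T" for s t
    using assms(1,2) card_le_Suc0_iff_eq that by fastforce
  consider "x \<notin> T" "y \<notin> T" | "x \<in> T" | "y \<in> T"
    by blast
  then show thesis
  proof cases
    case 2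
    then have "y \<notin> T" "z \<notin> T"
      using single[of x y] single[of x z] assms(3) by auto
    then show thesis
      using that[of y z] assms(3) by simp
  next
    case 3
    then have "x \<notin> T" "z \<notin> T"
      using single[of y x] single[of y z] assms(3) by auto
    then show thesis
      using that[of x z] assms(3) by simp
  qed (use that[of x y] assms(3) in simp)
qed

lemma reducible_C4_in_K23:
  assumes sg: "simple_graph V E" and tf: "triangle_free E"
    and K23: "V = {x, y, z, a, b}" "distinct [x, y, z, a, b]"
      "neighbors E x = {a, b}" "neighbors E y = {a, b}" "neighbors E z = {a, b}"
    and f: "bound_221 V f" "\<forall>v\<in>V. f v \<le> degree E v"
  obtains u w where "reducible_C4 V E f a u b w"
proof -
  have "a \<noteq> b"
    using K23(2) by simp
  have deg_xyz: "degree E v = 2" if "v \<in> {x, y, z}" for v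
    using that K23(3-5) \<open>a \<noteq> b\<close> by (auto simp: degree_def)
  have "{v\<in>V. f v < 3} = {x, y, z}"
  proof (rule card_le_3_eq)
    show "finite {v\<in>V. f v < 3}" "card {v\<in>V. f v < 3} \<le> 3"
      using f(1) simple_graph_finite[OF sg] by (auto simp: bound_221_def)
    show "{x, y, z} \<subseteq> {v\<in>V. f v < 3}"
      using deg_xyz f(2) K23(1) by fastforce
  qed (use K23(2) in simp)
  moreover have "a \<in> V" "b \<in> V" "a \<notin> {x, y, z}" "b \<notin> {x, y, z}"
    using K23(1,2) by auto
  ultimately have "3 \<le> f a" "3 \<le> f b"
    by (metis (no_types, lifting) mem_Collect_eq not_less)+
  have "{a, b} \<notin> E"
    using triangle_free_neighbors_pair[OF tf K23(3)] .
  have N_ab: "neighbors E v \<subseteq> {x, y, z}" if "v \<in> {a, b}" for v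
  proof
    fix u assume "u \<in> neighbors E v"
    then have "u \<in> V" "u \<noteq> v" "{u, v} \<noteq> {a, b}"
      using neighbors_subset[OF sg, of v] self_notin_neighbors[OF sg, of v] \<open>{a, b} \<notin> E\<close>
      by (auto simp: in_neighbors_iff)
    then show "u \<in> {x, y, z}"
      using that K23(1) by auto
  qed
  have "card {x, y, z} = 3"
    using K23(2) by simp
  then have "degree E a \<le> 3" "degree E b \<le> 3"
    using degree_le_card[OF sg N_ab] by fastforce+
  obtain u w where uw: "u \<in> {x, y, z}" "w \<in> {x, y, z}" "u \<noteq> w" "2 \<le> f u" "2 \<le> f w"
  proof -
    have "finite {v\<in>V. f v < 2}" "card {v\<in>V. f v < 2} \<le> 1" "distinct [x, y, z]"
      using f(1) simple_graph_finite[OF sg] K23(2) by (auto simp: bound_221_def)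
    then obtain u w where "u \<in> {x, y, z}" "w \<in> {x, y, z}" "u \<noteq> w"
      "u \<notin> {v\<in>V. f v < 2}" "w \<notin> {v\<in>V. f v < 2}"
      by (rule two_of_three_outside)
    moreover have "{x, y, z} \<subseteq> V"
      using K23(1) by blast
    ultimately show thesis
      using that[of u w] by auto
  qed
  have "reducible_C4 V E f a u b w"
    unfolding reducible_C4_def
    using uw K23 deg_xyz[OF uw(1)] deg_xyz[OF uw(2)] \<open>degree E a \<le> 3\<close> \<open>degree E b \<le> 3\<close>
      \<open>3 \<le> f a\<close> \<open>3 \<le> f b\<close> neighbors_eq_pairD[of E u a b] neighbors_eq_pairD[of E w a b]
    by auto
  then show thesis
    using that by blast
qed

lemma degree_remove_leaf:
  assumes "simple_graph V E" "neighbors E z = {w}" "v \<noteq> z"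
  shows "degree E v = degree (remove_vertices {z} E) v + (if v = w then 1 else 0)"
proof -
  have "z \<in> neighbors E v \<longleftrightarrow> v \<in> neighbors E z"
    by (simp add: in_neighbors_iff insert_commute)
  then have z_iff: "z \<in> neighbors E v \<longleftrightarrow> v = w"
    using assms(2) by simp
  have N: "neighbors (remove_vertices {z} E) v = neighbors E v - {z}"
    using neighbors_remove_vertices[of v "{z}" E] assms(3) by simp
  show ?thesis
  proof (cases "v = w")
    case True
    then show ?thesis
      using z_iff N finite_neighbors[OF assms(1), of v] card_Suc_Diff1 by (fastforce simp: degree_def)
  next
    case False
    then show ?thesis
      using z_iff N by (simp add: degree_def)
  qed
qed

lemma reducible_C4_remove_leaf:
  assumes "simple_graph V E" "neighbors E z = {w}" "1 \<le> f w"
    and "reducible_C4 (V - {z}) (remove_vertices {z} E) (f(w := f w - 1)) a p b q"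
  shows "reducible_C4 V E f a p b q"
proof -
  have "degree E v \<le> f v" if "v \<in> {a, p, b, q}" for v
  proof -
    have "v \<noteq> z" "degree (remove_vertices {z} E) v \<le> (f(w := f w - 1)) v"
      using assms(4) that by (auto simp: reducible_C4_def)
    then show ?thesis
      using degree_remove_leaf[OF assms(1,2)] assms(3) by (auto split: if_splits)
  qed
  then show ?thesis
    using assms(4) by (auto simp: reducible_C4_def remove_vertices_def)
qed

lemma bound_221_remove_leaf:
  assumes f: "bound_221 V f" "finite V" and z: "z \<in> V" "f z < 2" and w: "w \<in> V" "w \<noteq> z"
  shows "bound_221 (V - {z}) (f(w := f w - 1))" and "2 \<le> f w"
proof -
  have single: "v = z" if "v \<in> V" "f v < 2" for v
    using f z that card_le_Suc0_iff_eq[of "{v\<in>V. f v < 2}"] by (auto simp: bound_221_def)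
  then show "2 \<le> f w"
    using w by force
  have "{v\<in>V - {z}. (f(w := f w - 1)) v < 2} \<subseteq> {w}"
    using single by auto
  then have "card {v\<in>V - {z}. (f(w := f w - 1)) v < 2} \<le> 1"
    using card_mono[of "{w}"] by fastforce
  moreover have "card {v\<in>V - {z}. (f(w := f w - 1)) v < 3} \<le> 3"
  proof -
    define S where "S = {v\<in>V. f v < 3}"
    have "{v\<in>V - {z}. (f(w := f w - 1)) v < 3} \<subseteq> insert w (S - {z})"
      by (auto simp: S_def)
    then have "card {v\<in>V - {z}. (f(w := f w - 1)) v < 3} \<le> card (insert w (S - {z}))"
      using f(2) by (intro card_mono) (auto simp: S_def)
    also have "\<dots> \<le> Suc (card (S - {z}))"
      using f(2) by (simp add: S_def card_insert_if)
    also have "\<dots> = card S"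
      using card_Suc_Diff1[of S z] f(2) z by (simp add: S_def)
    finally show ?thesis
      using f(1) by (simp add: S_def bound_221_def)
  qed
  ultimately show "bound_221 (V - {z}) (f(w := f w - 1))"
    using f(1) \<open>2 \<le> f w\<close> by (auto simp: bound_221_def)
qed

theorem reducible_C4_exists:
  assumes "simple_graph V E" "triangle_free E" "\<not> has_K4_minor V E" "V \<noteq> {}"
    and "bound_221 V f" "\<forall>v\<in>V. f v \<le> degree E v"
  shows "\<exists>a p b q. reducible_C4 V E f a p b q"
  using assms
proof (induction "card V" arbitrary: V E f rule: less_induct)
  case less
  note sg = less.prems(1) and tf = less.prems(2) and nk = less.prems(3) and f = less.prems(5,6)
  show ?case
  proof (cases "\<exists>z\<in>V. degree E z = 1")
    case True
    then obtain z w where z: "z \<in> V" "neighbors E z = {w}"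
      by (metis One_nat_def card_1_singletonE degree_def)
    have "w \<in> V" "w \<noteq> z"
      using simple_graph_edgeD[OF sg neighbors_eq_pairD(1)[of E z w w]] z by auto
    have "f z \<le> degree E z"
      using f(2) z(1) by blast
    then have "f z < 2"
      using z(2) by (simp add: degree_def)
    note f' = bound_221_remove_leaf[OF f(1) simple_graph_finite[OF sg] z(1) \<open>f z < 2\<close> \<open>w \<in> V\<close> \<open>w \<noteq> z\<close>]
    have "\<forall>v\<in>V - {z}. (f(w := f w - 1)) v \<le> degree (remove_vertices {z} E) v"
    proof
      fix v assume "v \<in> V - {z}"
      then show "(f(w := f w - 1)) v \<le> degree (remove_vertices {z} E) v"
        using f(2) degree_remove_leaf[OF sg z(2), of v] by auto
    qed
    moreover have "\<not> has_K4_minor (V - {z}) (remove_vertices {z} E)"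
      using nk has_K4_minor_remove_vertices by blast
    moreover have "V - {z} \<noteq> {}"
      using \<open>w \<in> V\<close> \<open>w \<noteq> z\<close> by blast
    ultimately have "\<exists>a p b q. reducible_C4 (V - {z}) (remove_vertices {z} E) (f(w := f w - 1)) a p b q"
      using less.hyps[OF card_Diff1_less[OF simple_graph_finite[OF sg] z(1)]
          simple_graph_remove_vertices[OF sg] triangle_free_remove_vertices[OF tf] _ _ f'(1)]
      by blast
    then obtain a p b q where "reducible_C4 (V - {z}) (remove_vertices {z} E) (f(w := f w - 1)) a p b q"
      by blast
    then have "reducible_C4 V E f a p b q"
      using reducible_C4_remove_leaf[OF sg z(2)] f'(2) by simp
    then show ?thesis
      by blast
  next
    case False
    have min2: "\<forall>v\<in>V. 2 \<le> degree E v"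
    proof
      fix v assume "v \<in> V"
      then have "1 \<le> f v" "f v \<le> degree E v" "degree E v \<noteq> 1"
        using f False by (auto simp: bound_221_def)
      then show "2 \<le> degree E v"
        by linarith
    qed
    have "{v\<in>V. degree E v \<le> 2} \<subseteq> {v\<in>V. f v < 3}"
      using f(2) by fastforce
    then have "card {v\<in>V. degree E v \<le> 2} \<le> card {v\<in>V. f v < 3}"
      using simple_graph_finite[OF sg] by (intro card_mono) auto
    also have "\<dots> \<le> 3"
      using f(1) by (simp add: bound_221_def)
    finally obtain x y z a b where "V = {x, y, z, a, b}" "distinct [x, y, z, a, b]"
      "neighbors E x = {a, b}" "neighbors E y = {a, b}" "neighbors E z = {a, b}"
      using K23_if_few_degree_two[OF sg tf nk less.prems(4) min2] by blast
    then obtain u w where "reducible_C4 V E f a u b w"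
      using reducible_C4_in_K23[OF sg tf _ _ _ _ _ f] by blast
    then show ?thesis
      by blast
  qed
qed

lemma outdeg_eq_card_arcs: "outdeg F v = card {e\<in>F. fst e = v}"
proof -
  have "{e\<in>F. fst e = v} = Pair v ` {w. (v, w) \<in> F}"
    by force
  moreover have "inj (Pair v)"
    by (simp add: inj_on_def)
  ultimately show ?thesis
    unfolding outdeg_def by (metis card_image inj_on_subset subset_UNIV)
qed

lemma sum_outdeg:
  assumes "finite F" "finite X"
  shows "(\<Sum>v\<in>X. outdeg F v) = card {e\<in>F. fst e \<in> X}"
proof -
  have "{e\<in>F. fst e \<in> X} = (\<Union>v\<in>X. {e\<in>F. fst e = v})"
    by blast
  also have "card \<dots> = (\<Sum>v\<in>X. card {e\<in>F. fst e = v})"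
    using assms by (intro card_UN_disjoint) auto
  finally show ?thesis
    by (simp add: outdeg_eq_card_arcs)
qed

lemma sum_indeg:
  assumes "finite F" "finite X"
  shows "(\<Sum>v\<in>X. indeg F v) = card {e\<in>F. snd e \<in> X}"
proof -
  have "indeg F v = outdeg (converse F) v" for v
    by (simp add: indeg_def outdeg_def)
  moreover have "{e\<in>converse F. fst e \<in> X} = prod.swap ` {e\<in>F. snd e \<in> X}"
    by force
  ultimately show ?thesis
    using sum_outdeg[of "converse F" X] assms by (simp add: card_image)
qed

lemma no_arc_leaves_if_none_enters:
  assumes "finite F" "finite X" "\<forall>v\<in>X. outdeg F v = indeg F v"
    and "\<forall>(u, w)\<in>F. w \<in> X \<longrightarrow> u \<in> X"
  shows "\<forall>(u, w)\<in>F. u \<in> X \<longrightarrow> w \<in> X"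
proof -
  have "{e\<in>F. snd e \<in> X} \<subseteq> {e\<in>F. fst e \<in> X}"
    using assms(4) by auto
  moreover have "card {e\<in>F. fst e \<in> X} = card {e\<in>F. snd e \<in> X}"
    using sum_outdeg[OF assms(1,2)] sum_indeg[OF assms(1,2)] assms(3) by simp
  ultimately have "{e\<in>F. snd e \<in> X} = {e\<in>F. fst e \<in> X}"
    using assms(1) by (intro card_subset_eq) auto
  show ?thesis
  proof clarify
    fix u w assume "(u, w) \<in> F" "u \<in> X"
    then have "(u, w) \<in> {e\<in>F. snd e \<in> X}"
      using \<open>{e\<in>F. snd e \<in> X} = {e\<in>F. fst e \<in> X}\<close> by simp
    then show "w \<in> X"
      by simp
  qed
qed

lemma eulerian_subdigraphs_cut:
  assumes "finite V" "X \<subseteq> V"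
    and D1: "D1 \<subseteq> (V - X) \<times> (V - X)" and D2: "D2 \<subseteq> X \<times> X" and Out: "Out \<subseteq> X \<times> (V - X)"
  shows "eulerian_subdigraphs V (D1 \<union> D2 \<union> Out) =
    (\<lambda>(F1, F2). F1 \<union> F2) ` (eulerian_subdigraphs (V - X) D1 \<times> eulerian_subdigraphs X D2)"
proof (intro equalityI subsetI)
  fix F assume "F \<in> eulerian_subdigraphs V (D1 \<union> D2 \<union> Out)"
  then have F: "F \<subseteq> D1 \<union> D2 \<union> Out" and balanced: "\<forall>v\<in>V. outdeg F v = indeg F v"
    by (auto simp: eulerian_subdigraphs_def)
  have "F \<subseteq> V \<times> V"
    using F D1 D2 Out assms(2) by blast
  then have "finite F"
    using assms(1) finite_subset by blast
  have "finite X"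
    using assms(1,2) finite_subset by blast
  have "\<forall>v\<in>X. outdeg F v = indeg F v"
    using balanced assms(2) by blast
  have "\<forall>(u, w)\<in>F. w \<in> X \<longrightarrow> u \<in> X"
  proof clarify
    fix u w assume "(u, w) \<in> F" "w \<in> X"
    then have "(u, w) \<in> D1 \<or> (u, w) \<in> D2 \<or> (u, w) \<in> Out"
      using F by blast
    then show "u \<in> X"
      using D1 D2 Out \<open>w \<in> X\<close> by blast
  qed
  then have "\<forall>(u, w)\<in>F. u \<in> X \<longrightarrow> w \<in> X"
    by (rule no_arc_leaves_if_none_enters[OF \<open>finite F\<close> \<open>finite X\<close> \<open>\<forall>v\<in>X. outdeg F v = indeg F v\<close>])
  then have "F \<inter> Out = {}"
    using Out by blast
  define F1 where "F1 = F \<inter> D1"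
  define F2 where "F2 = F \<inter> D2"
  have "F = F1 \<union> F2"
    using F \<open>F \<inter> Out = {}\<close> by (auto simp: F1_def F2_def)
  have "outdeg F1 v = indeg F1 v" if "v \<in> V - X" for v
  proof -
    have "{w. (v, w) \<in> F1} = {w. (v, w) \<in> F}" "{w. (w, v) \<in> F1} = {w. (w, v) \<in> F}"
      using that F D2 \<open>F \<inter> Out = {}\<close> by (auto simp: F1_def)
    then show ?thesis
      using balanced that by (simp add: outdeg_def indeg_def)
  qed
  then have "F1 \<in> eulerian_subdigraphs (V - X) D1"
    by (simp add: eulerian_subdigraphs_def F1_def)
  have "outdeg F2 v = indeg F2 v" if "v \<in> X" for v
  proof -
    have "{w. (v, w) \<in> F2} = {w. (v, w) \<in> F}" "{w. (w, v) \<in> F2} = {w. (w, v) \<in> F}"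
      using that F D1 Out \<open>F \<inter> Out = {}\<close> by (auto simp: F2_def)
    then show ?thesis
      using balanced that assms(2) by (auto simp: outdeg_def indeg_def)
  qed
  then have "F2 \<in> eulerian_subdigraphs X D2"
    by (simp add: eulerian_subdigraphs_def F2_def)
  show "F \<in> (\<lambda>(F1, F2). F1 \<union> F2) ` (eulerian_subdigraphs (V - X) D1 \<times> eulerian_subdigraphs X D2)"
    using \<open>F = F1 \<union> F2\<close> \<open>F1 \<in> _\<close> \<open>F2 \<in> _\<close> by (intro image_eqI[of _ _ "(F1, F2)"]) simp_all
next
  fix F assume "F \<in> (\<lambda>(F1, F2). F1 \<union> F2) ` (eulerian_subdigraphs (V - X) D1 \<times> eulerian_subdigraphs X D2)"
  then obtain P where "P \<in> eulerian_subdigraphs (V - X) D1 \<times> eulerian_subdigraphs X D2"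
    and "F = (\<lambda>(F1, F2). F1 \<union> F2) P" ..
  then obtain F1 F2 where F: "F = F1 \<union> F2" and F1: "F1 \<in> eulerian_subdigraphs (V - X) D1"
    and F2: "F2 \<in> eulerian_subdigraphs X D2"
    by (cases P) simp
  have "outdeg F v = indeg F v" if "v \<in> V" for v
  proof (cases "v \<in> X")
    case True
    then have "{w. (v, w) \<in> F} = {w. (v, w) \<in> F2}" "{w. (w, v) \<in> F} = {w. (w, v) \<in> F2}"
      using F F1 D1 by (auto simp: eulerian_subdigraphs_def)
    then show ?thesis
      using F2 True by (simp add: eulerian_subdigraphs_def outdeg_def indeg_def)
  next
    case False
    then have "{w. (v, w) \<in> F} = {w. (v, w) \<in> F1}" "{w. (w, v) \<in> F} = {w. (w, v) \<in> F1}"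
      using F F2 D2 by (auto simp: eulerian_subdigraphs_def)
    then show ?thesis
      using F1 False that by (simp add: eulerian_subdigraphs_def outdeg_def indeg_def)
  qed
  then show "F \<in> eulerian_subdigraphs V (D1 \<union> D2 \<union> Out)"
    using F F1 F2 by (auto simp: eulerian_subdigraphs_def)
qed

lemma finite_eulerian_subdigraphs: "finite D \<Longrightarrow> finite (eulerian_subdigraphs V D)"
  unfolding eulerian_subdigraphs_def by (rule finite_subset[of _ "Pow D"]) auto

lemma diff_eq_sum:
  assumes "finite D"
  shows "diff V D = (\<Sum>F\<in>eulerian_subdigraphs V D. (- 1) ^ card F)"
proof -
  let ?S = "eulerian_subdigraphs V D"
  have "(\<Sum>F\<in>?S. (- 1 :: int) ^ card F) = (\<Sum>F\<in>?S. if even (card F) then 1 else - 1)"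
    by (simp add: minus_one_power_iff)
  also have "\<dots> = int (card {F\<in>?S. even (card F)}) - int (card {F\<in>?S. odd (card F)})"
    using finite_eulerian_subdigraphs[OF assms]
    by (simp add: sum.If_cases Int_def sum_negf)
  finally show ?thesis
    by (simp add: diff_def)
qed

lemma diff_cut:
  assumes "finite V" "X \<subseteq> V"
    and D1: "D1 \<subseteq> (V - X) \<times> (V - X)" and D2: "D2 \<subseteq> X \<times> X" and Out: "Out \<subseteq> X \<times> (V - X)"
  shows "diff V (D1 \<union> D2 \<union> Out) = diff (V - X) D1 * diff X D2"
proof -
  let ?E1 = "eulerian_subdigraphs (V - X) D1" and ?E2 = "eulerian_subdigraphs X D2"
  have fin: "finite D1" "finite D2" "finite (D1 \<union> D2 \<union> Out)"
    using assms by (meson finite_SigmaI finite_Diff finite_subset finite_Un)+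
  have parts: "F1 \<subseteq> D1" "F2 \<subseteq> D2" if "(F1, F2) \<in> ?E1 \<times> ?E2" for F1 F2
    using that by (simp_all add: eulerian_subdigraphs_def)
  have "D1 \<inter> D2 = {}"
    using D1 D2 by blast
  have "inj_on (\<lambda>(F1, F2). F1 \<union> F2) (?E1 \<times> ?E2)"
  proof (rule inj_on_inverseI[where g = "\<lambda>F. (F \<inter> D1, F \<inter> D2)"])
    fix P assume "P \<in> ?E1 \<times> ?E2"
    moreover obtain F1 F2 where "P = (F1, F2)"
      by fastforce
    ultimately have "F1 \<subseteq> D1" "F2 \<subseteq> D2"
      using parts by blast+
    with \<open>P = (F1, F2)\<close> \<open>D1 \<inter> D2 = {}\<close> show "(\<lambda>F. (F \<inter> D1, F \<inter> D2)) ((\<lambda>(F1, F2). F1 \<union> F2) P) = P"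
      by auto
  qed
  have card_union: "card (F1 \<union> F2) = card F1 + card F2" if "(F1, F2) \<in> ?E1 \<times> ?E2" for F1 F2
    using parts[OF that] fin \<open>D1 \<inter> D2 = {}\<close> by (meson card_Un_disjoint disjoint_iff finite_subset subsetD)
  have "diff V (D1 \<union> D2 \<union> Out) = (\<Sum>F\<in>(\<lambda>(F1, F2). F1 \<union> F2) ` (?E1 \<times> ?E2). (- 1) ^ card F)"
    using diff_eq_sum[OF fin(3)] eulerian_subdigraphs_cut[OF assms] by simp
  also have "\<dots> = (\<Sum>(F1, F2)\<in>?E1 \<times> ?E2. (- 1) ^ card (F1 \<union> F2))"
    using sum.reindex[OF \<open>inj_on _ _\<close>] by (simp add: comp_def case_prod_unfold)
  also have "\<dots> = (\<Sum>(F1, F2)\<in>?E1 \<times> ?E2. (- 1) ^ card F1 * (- 1) ^ card F2)"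
    by (rule sum.cong) (auto simp: card_union power_add)
  also have "\<dots> = diff (V - X) D1 * diff X D2"
    by (simp add: diff_eq_sum fin sum_product sum.cartesian_product)
  finally show ?thesis .
qed

definition induced_edges :: "'a set \<Rightarrow> 'a set set \<Rightarrow> 'a set set" where
  "induced_edges X E = {e \<in> E. e \<subseteq> X}"

definition out_arcs :: "'a set \<Rightarrow> 'a set set \<Rightarrow> ('a \<times> 'a) set" where
  "out_arcs X E = {(u, w). u \<in> X \<and> w \<notin> X \<and> {u, w} \<in> E}"

lemma orientation_arcs_subset:
  assumes "simple_graph V E" "orientation E D"
  shows "D \<subseteq> V \<times> V"
proof clarify
  fix u w assume "(u, w) \<in> D"
  then have "{u, w} \<in> E"
    using assms(2) by (auto simp: orientation_def)
  then show "u \<in> V \<and> w \<in> V"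
    using simple_graph_edgeD[OF assms(1)] by blast
qed

lemma simple_graph_induced_edges:
  assumes "simple_graph V E" "X \<subseteq> V"
  shows "simple_graph X (induced_edges X E)"
  unfolding simple_graph_def
proof (intro conjI ballI)
  show "finite X"
    using assms finite_subset simple_graph_finite by blast
  fix e assume "e \<in> induced_edges X E"
  then obtain u v where "u \<noteq> v" "e = {u, v}" "e \<subseteq> X"
    using assms(1) by (auto simp: induced_edges_def simple_graph_def)
  then show "\<exists>u v. u \<noteq> v \<and> u \<in> X \<and> v \<in> X \<and> e = {u, v}"
    by blast
qed

lemma orientation_cut:
  assumes sg: "simple_graph V E"
    and D1: "orientation (remove_vertices X E) D1" and D2: "orientation (induced_edges X E) D2"
  shows "orientation E (D1 \<union> D2 \<union> out_arcs X E)"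
proof -
  have arc1: "{u, w} \<in> E \<and> u \<notin> X \<and> w \<notin> X" if "(u, w) \<in> D1" for u w
    using that D1 by (auto simp: orientation_def remove_vertices_def)
  have arc2: "{u, w} \<in> E \<and> u \<in> X \<and> w \<in> X" if "(u, w) \<in> D2" for u w
    using that D2 by (auto simp: orientation_def induced_edges_def)
  have "(x, y) \<in> D1 \<union> D2 \<union> out_arcs X E \<longleftrightarrow> (y, x) \<notin> D1 \<union> D2 \<union> out_arcs X E"
    if "{x, y} \<in> E" for x y
  proof -
    consider "x \<in> X" "y \<in> X" | "x \<notin> X" "y \<notin> X" | "x \<in> X \<longleftrightarrow> y \<notin> X"
      by blast
    then show ?thesis
    proof cases
      case 1
      then have "{x, y} \<in> induced_edges X E"
        using that by (simp add: induced_edges_def)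
      then have "(x, y) \<in> D2 \<longleftrightarrow> (y, x) \<notin> D2"
        using D2 unfolding orientation_def by blast
      with 1 show ?thesis
        using arc1 by (auto simp: out_arcs_def)
    next
      case 2
      then have "{x, y} \<in> remove_vertices X E"
        using that by (simp add: remove_vertices_def)
      then have "(x, y) \<in> D1 \<longleftrightarrow> (y, x) \<notin> D1"
        using D1 unfolding orientation_def by blast
      with 2 show ?thesis
        using arc2 by (auto simp: out_arcs_def)
    next
      case 3
      with that show ?thesis
        using arc1 arc2 by (auto simp: out_arcs_def insert_commute)
    qed
  qed
  then show ?thesis
    using arc1 arc2 by (auto simp: orientation_def out_arcs_def)
qed

lemma outdeg_cut:
  assumes "simple_graph V E" "X \<subseteq> V" and D1: "D1 \<subseteq> (V - X) \<times> (V - X)" and D2: "D2 \<subseteq> X \<times> X"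
  shows "u \<notin> X \<Longrightarrow> outdeg (D1 \<union> D2 \<union> out_arcs X E) u = outdeg D1 u"
    and "u \<in> X \<Longrightarrow> outdeg (D1 \<union> D2 \<union> out_arcs X E) u = outdeg D2 u + card (neighbors E u - X)"
proof -
  assume "u \<notin> X"
  then have "{w. (u, w) \<in> D1 \<union> D2 \<union> out_arcs X E} = {w. (u, w) \<in> D1}"
    using D2 by (auto simp: out_arcs_def)
  then show "outdeg (D1 \<union> D2 \<union> out_arcs X E) u = outdeg D1 u"
    by (simp add: outdeg_def)
next
  assume "u \<in> X"
  then have "{w. (u, w) \<in> D1 \<union> D2 \<union> out_arcs X E} = {w. (u, w) \<in> D2} \<union> (neighbors E u - X)"
    using D1 D2 by (auto simp: out_arcs_def in_neighbors_iff insert_commute)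
  moreover have "{w. (u, w) \<in> D2} \<subseteq> V"
    using D2 assms(2) by blast
  then have "finite {w. (u, w) \<in> D2}"
    using simple_graph_finite[OF assms(1)] finite_subset by blast
  moreover have "{w. (u, w) \<in> D2} \<inter> (neighbors E u - X) = {}"
    using D2 by blast
  ultimately show "outdeg (D1 \<union> D2 \<union> out_arcs X E) u = outdeg D2 u + card (neighbors E u - X)"
    using finite_neighbors[OF assms(1)] by (simp add: outdeg_def card_Un_disjoint)
qed

theorem f_AT_extend:
  assumes sg: "simple_graph V E" and "X \<subseteq> V"
    and rest: "f_AT (V - X) (remove_vertices X E) f"
    and D2: "AT_orientation X (induced_edges X E) D2"
    and bound: "\<forall>u\<in>X. outdeg D2 u + card (neighbors E u - X) \<le> f u - 1"
  shows "f_AT V E f"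
proof -
  obtain D1 where D1: "AT_orientation (V - X) (remove_vertices X E) D1"
    and bound1: "\<forall>u\<in>V - X. outdeg D1 u \<le> f u - 1"
    using rest by (auto simp: f_AT_def)
  have arcs: "D1 \<subseteq> (V - X) \<times> (V - X)" "D2 \<subseteq> X \<times> X" "out_arcs X E \<subseteq> X \<times> (V - X)"
    using orientation_arcs_subset[OF simple_graph_remove_vertices[OF sg]] D1
      orientation_arcs_subset[OF simple_graph_induced_edges[OF sg \<open>X \<subseteq> V\<close>]] D2
      simple_graph_edgeD[OF sg]
    by (auto simp: AT_orientation_def out_arcs_def)
  let ?D = "D1 \<union> D2 \<union> out_arcs X E"
  have "orientation E ?D"
    using orientation_cut[OF sg] D1 D2 by (simp add: AT_orientation_def)
  moreover have "diff V ?D \<noteq> 0"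
    using diff_cut[OF simple_graph_finite[OF sg] \<open>X \<subseteq> V\<close> arcs] D1 D2 by (simp add: AT_orientation_def)
  moreover have "outdeg ?D u \<le> f u - 1" if "u \<in> V" for u
    using outdeg_cut[OF sg \<open>X \<subseteq> V\<close> arcs(1,2), of u] bound bound1 that by (cases "u \<in> X") auto
  ultimately show ?thesis
    unfolding f_AT_def AT_orientation_def by blast
qed

lemma diff_empty_digraph: "diff V {} = 1"
proof -
  have "eulerian_subdigraphs V {} = {{}}"
    by (auto simp: eulerian_subdigraphs_def outdeg_def indeg_def)
  then show ?thesis
    by (simp add: diff_eq_sum)
qed

lemma f_AT_empty:
  assumes "simple_graph {} E"
  shows "f_AT {} E f"
proof -
  have "orientation E {}"
    using assms by (auto simp: orientation_def simple_graph_def)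
  then show ?thesis
    unfolding f_AT_def AT_orientation_def by (intro exI[of _ "{}"]) (simp add: diff_empty_digraph)
qed

corollary f_AT_add_vertex:
  assumes sg: "simple_graph V E" and "v \<in> V"
    and rest: "f_AT (V - {v}) (remove_vertices {v} E) f" and "degree E v < f v"
  shows "f_AT V E f"
proof (rule f_AT_extend[OF sg _ rest])
  have "induced_edges {v} E = {}"
    using sg unfolding simple_graph_def induced_edges_def by fastforce
  then show "AT_orientation {v} (induced_edges {v} E) {}"
    by (simp add: AT_orientation_def orientation_def diff_empty_digraph)
  have "neighbors E v - {v} = neighbors E v"
    using self_notin_neighbors[OF sg] by blast
  then show "\<forall>u\<in>{v}. outdeg {} u + card (neighbors E u - {v}) \<le> f u - 1"
    using \<open>degree E v < f v\<close> by (simp add: outdeg_def degree_def)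
qed (use \<open>v \<in> V\<close> in simp)

lemma outdeg_unique_successor:
  assumes "F \<subseteq> D" "{w. (v, w) \<in> D} = {s}"
  shows "outdeg F v = (if (v, s) \<in> F then 1 else 0)"
proof -
  have "{w. (v, w) \<in> F} = (if (v, s) \<in> F then {s} else {})"
    using assms by auto
  then show ?thesis
    by (simp add: outdeg_def)
qed

lemma indeg_unique_predecessor:
  assumes "F \<subseteq> D" "{w. (w, v) \<in> D} = {r}"
  shows "indeg F v = (if (r, v) \<in> F then 1 else 0)"
proof -
  have "{w. (w, v) \<in> F} = (if (r, v) \<in> F then {r} else {})"
    using assms by auto
  then show ?thesis
    by (simp add: indeg_def)
qed

lemma eulerian_subdigraphs_directed_C4:
  assumes "distinct [a, p, b, q]"
  defines "C \<equiv> {(a, p), (p, b), (b, q), (q, a)}"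
  shows "eulerian_subdigraphs {a, p, b, q} C = {{}, C}"
proof -
  have succ: "{w. (a, w) \<in> C} = {p}" "{w. (p, w) \<in> C} = {b}" "{w. (b, w) \<in> C} = {q}"
      "{w. (q, w) \<in> C} = {a}"
    and pred: "{w. (w, a) \<in> C} = {q}" "{w. (w, p) \<in> C} = {a}" "{w. (w, b) \<in> C} = {p}"
      "{w. (w, q) \<in> C} = {b}"
    using assms(1) by (auto simp: C_def)
  have balanced_iff: "(\<forall>v\<in>{a, p, b, q}. outdeg F v = indeg F v) \<longleftrightarrow>
      ((a, p) \<in> F \<longleftrightarrow> (q, a) \<in> F) \<and> ((p, b) \<in> F \<longleftrightarrow> (a, p) \<in> F) \<and>
      ((b, q) \<in> F \<longleftrightarrow> (p, b) \<in> F) \<and> ((q, a) \<in> F \<longleftrightarrow> (b, q) \<in> F)"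
    if "F \<subseteq> C" for F
    using outdeg_unique_successor[OF that succ(1)] outdeg_unique_successor[OF that succ(2)]
      outdeg_unique_successor[OF that succ(3)] outdeg_unique_successor[OF that succ(4)]
      indeg_unique_predecessor[OF that pred(1)] indeg_unique_predecessor[OF that pred(2)]
      indeg_unique_predecessor[OF that pred(3)] indeg_unique_predecessor[OF that pred(4)]
    by auto
  show ?thesis
  proof (intro equalityI subsetI)
    fix F assume "F \<in> eulerian_subdigraphs {a, p, b, q} C"
    then have "F \<subseteq> C" "\<forall>v\<in>{a, p, b, q}. outdeg F v = indeg F v"
      by (auto simp: eulerian_subdigraphs_def)
    then show "F \<in> {{}, C}"
      using balanced_iff[of F] by (cases "(a, p) \<in> F") (auto simp: C_def)
  next
    fix F assume "F \<in> {{}, C}"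
    then have "F = {} \<or> F = C"
      by simp
    have "F \<subseteq> C" and cyc: "((a, p) \<in> F \<longleftrightarrow> (q, a) \<in> F) \<and> ((p, b) \<in> F \<longleftrightarrow> (a, p) \<in> F) \<and>
      ((b, q) \<in> F \<longleftrightarrow> (p, b) \<in> F) \<and> ((q, a) \<in> F \<longleftrightarrow> (b, q) \<in> F)"
      using \<open>F = {} \<or> F = C\<close> unfolding C_def by blast+
    have "\<forall>v\<in>{a, p, b, q}. outdeg F v = indeg F v"
      using balanced_iff[OF \<open>F \<subseteq> C\<close>] cyc by (rule iffD2)
    with \<open>F \<subseteq> C\<close> show "F \<in> eulerian_subdigraphs {a, p, b, q} C"
      by (simp add: eulerian_subdigraphs_def)
  qed
qed

lemma diff_directed_C4:
  assumes "distinct [a, p, b, q]"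
  shows "diff {a, p, b, q} {(a, p), (p, b), (b, q), (q, a)} = 2"
proof -
  have "card {(a, p), (p, b), (b, q), (q, a)} = 4"
    using assms by auto
  then show ?thesis
    using eulerian_subdigraphs_directed_C4[OF assms] by (simp add: diff_eq_sum)
qed

corollary f_AT_add_C4:
  assumes sg: "simple_graph V E" and tf: "triangle_free E" and C4: "reducible_C4 V E f a p b q"
    and rest: "f_AT (V - {a, p, b, q}) (remove_vertices {a, p, b, q} E) f"
  shows "f_AT V E f"
proof -
  let ?X = "{a, p, b, q}" and ?C = "{(a, p), (p, b), (b, q), (q, a)}"
  have dist: "distinct [a, p, b, q]" and edges: "{a, p} \<in> E" "{p, b} \<in> E" "{b, q} \<in> E" "{q, a} \<in> E"
    and deg: "\<forall>v\<in>?X. degree E v \<le> f v" and "?X \<subseteq> V"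
    using C4 by (simp_all add: reducible_C4_def)
  have chords: "{a, b} \<notin> E" "{p, q} \<notin> E"
    using triangle_freeD[OF tf edges(1,2)] triangle_freeD[OF tf edges(2,3)] by (simp_all add: insert_commute)
  have "orientation (induced_edges ?X E) ?C"
    using dist edges chords simple_graph_edgeD(3)[OF sg]
    unfolding orientation_def induced_edges_def by (auto simp: insert_commute)
  then have "AT_orientation ?X (induced_edges ?X E) ?C"
    using diff_directed_C4[OF dist] by (simp add: AT_orientation_def)
  moreover have "outdeg ?C u + card (neighbors E u - ?X) \<le> f u - 1" if "u \<in> ?X" for u
  proof -
    have "outdeg ?C u = 1"
      using that dist by (auto simp: outdeg_def)
    moreover have "card (neighbors E u \<inter> ?X) = 2"
      using that dist edges chords self_notin_neighbors[OF sg, of u]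
      by (auto simp: in_neighbors_iff insert_commute)
    ultimately show ?thesis
      using that deg finite_neighbors[OF sg, of u] card_mono[of "neighbors E u" "neighbors E u \<inter> ?X"]
      by (auto simp: degree_def card_Diff_subset_Int)
  qed
  ultimately show ?thesis
    using f_AT_extend[OF sg \<open>?X \<subseteq> V\<close> rest] by blast
qed

theorem f_AT_if_bound_221:
  assumes "simple_graph V E" "triangle_free E" "\<not> has_K4_minor V E" "bound_221 V f"
  shows "f_AT V E f"
  using assms
proof (induction "card V" arbitrary: V E rule: less_induct)
  case less
  note sg = less.prems(1) and tf = less.prems(2) and nk = less.prems(3) and f = less.prems(4)
  have IH: "f_AT (V - X) (remove_vertices X E) f" if "X \<subseteq> V" "X \<noteq> {}" for X
  proof (rule less.hyps)
    show "card (V - X) < card V"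
      using that simple_graph_finite[OF sg] by (intro psubset_card_mono) auto
    show "bound_221 (V - X) f"
      using bound_221_subset[OF f _ simple_graph_finite[OF sg]] by blast
  qed (use sg tf nk has_K4_minor_remove_vertices simple_graph_remove_vertices
      triangle_free_remove_vertices in blast)+
  show ?case
  proof (cases "V = {}")
    case True
    then show ?thesis
      using f_AT_empty sg by simp
  next
    case False
    show ?thesis
    proof (cases "\<exists>v\<in>V. degree E v < f v")
      case True
      then obtain v where "v \<in> V" "degree E v < f v"
        by blast
      then show ?thesis
        using f_AT_add_vertex[OF sg] IH[of "{v}"] by blast
    next
      case False
      then have "\<forall>v\<in>V. f v \<le> degree E v"
        by (simp add: not_less)
      then obtain a p b q where C4: "reducible_C4 V E f a p b q"
        using reducible_C4_exists[OF sg tf nk \<open>V \<noteq> {}\<close> f] by blast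
      then have "{a, p, b, q} \<subseteq> V"
        by (simp add: reducible_C4_def)
      then show ?thesis
        using f_AT_add_C4[OF sg tf C4] IH[of "{a, p, b, q}"] by blast
    qed
  qed
qed

lemma bound_221_extension:
  assumes "finite V" "distinct [x, y, z]"
  shows "bound_221 V (\<lambda>v. case map_of (zip [x, y, z] [2, 2, 1]) v of None \<Rightarrow> 3 | Some a \<Rightarrow> a)"
    (is "bound_221 V ?f")
proof -
  have f: "?f v = (if v = x then 2 else if v = y then 2 else if v = z then 1 else 3)" for v
    using assms(2) by auto
  have "{v\<in>V. ?f v < 2} \<subseteq> {z}" "{v\<in>V. ?f v < 3} \<subseteq> {x, y, z}"
    by (auto simp: f split: if_splits)
  then have "card {v\<in>V. ?f v < 2} \<le> card {z}" "card {v\<in>V. ?f v < 3} \<le> card {x, y, z}"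
    by (intro card_mono; simp)+
  moreover have "card {z} = 1" "card {x, y, z} = 3"
    using assms(2) by simp_all
  moreover have "\<forall>v\<in>V. 1 \<le> ?f v"
    by (simp add: f)
  ultimately show ?thesis
    unfolding bound_221_def by linarith
qed

theorem mainTheorem5:
  fixes V :: "'a set" and E :: "'a set set"
  assumes "simple_graph V E"
    and "triangle_free E"
    and "\<not> has_K4_minor V E"
  shows "\<forall>x\<in>V. \<forall>y\<in>V. \<forall>z\<in>V. distinct [x, y, z] \<longrightarrow>
           AT_extendable V E [2, 2, 1] [x, y, z]"
  using f_AT_if_bound_221[OF assms bound_221_extension[OF simple_graph_finite[OF assms(1)]]]
  by (simp add: AT_extendable_def)

end
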